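(* Let $d\ge 1$ and $M>1$. For the online hitting set problem in which the point set is $\mathbb{Z}^d$ and the objects are (Euclidean) balls in $\mathbb{R}^d$ with radii in the range $[1,M]$, the deterministic online algorithm $\mathrm{ANC}$ described below achieves a competitive ratio of at most $\lfloor 2\sqrt{d}+2\rfloor^d\left(\lfloor\log_2 M\rfloor+1\right)$.
   Context: Online hitting set problem: the point set is known in advance; objects arrive one by one; upon each arrival the algorithm must ensure its current solution (points can only be added, never removed) contains a point of every object presented so far. The competitive ratio is the supremum over input sequences of the size of the algorithm's solution divided by the minimum size of an offline hitting set of the sequence. For an object (compact set with non-empty interior) $\sigma$ with boundary $\partial\sigma$, using $L_\infty$ distances $d_\infty$: $\alpha(x)=\min_{y\in\partial\sigma}d_\infty(x,y)/\max_{y\in\partial\sigma}d_\infty(x,y)$ for $x\in\sigma$; a center of $\sigma$ is a point $c\in\sigma$ maximizing $\alpha(x)$ (for a ball, its geometric center); the width of $\sigma$ is $\min_{y\in\partial\sigma}d_\infty(c,y)$. Algorithm $\mathrm{ANC}$: when an object $\sigma$ with center $c$ and width $w$ arrives, if it contains a point of the current solution do nothing. Otherwise let $i=\lfloor\log_2 w\rfloor$; for each $j\in[d]$ write uniquely $c(x_j)=z_j+f_j$ with $z_j\in 2^{i+1}\mathbb{Z}$ and $f_j\in[0,2^{i+1})$, set $r(x_j)=z_j$ if $f_j\in[0,2^i)$ and $r(x_j)=z_j+2^{i+1}$ if $f_j\in[2^i,2^{i+1})$, and add $r$ to the solution. *)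

theory Defs
  imports "HOL-Analysis.Analysis"
begin

text \<open>Points of R^d are modelled as real^'n with d = CARD('n).\<close>

definition linf_dist :: "real^'n \<Rightarrow> real^'n \<Rightarrow> real" where
  "linf_dist x y = Max (range (\<lambda>j. \<bar>x $ j - y $ j\<bar>))"

definition int_lattice :: "(real^'n) set" where
  "int_lattice = {x. \<forall>j. x $ j \<in> \<int>}"

definition width :: "(real^'n) set \<Rightarrow> real^'n \<Rightarrow> real" where
  "width \<sigma> c = Inf (linf_dist c ` frontier \<sigma>)"

definition anc_point :: "real^'n \<Rightarrow> real \<Rightarrow> real^'n" where
  "anc_point c w =
     (let i = \<lfloor>log 2 w\<rfloor>;
          s = (2::real) powr (of_int i + 1);
          h = (2::real) powr (of_int i)
      in \<chi> j. (let z = s * of_int \<lfloor>c $ j / s\<rfloor>; f = c $ j - z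
               in if f < h then z else z + s))"

definition anc_step :: "(real^'n) set \<Rightarrow> (real^'n) set \<times> (real^'n) \<Rightarrow> (real^'n) set" where
  "anc_step S oc =
     (let \<sigma> = fst oc; c = snd oc
      in if S \<inter> \<sigma> \<noteq> {} then S else insert (anc_point c (width \<sigma> c)) S)"

definition anc_run :: "((real^'n) set \<times> (real^'n)) list \<Rightarrow> (real^'n) set" where
  "anc_run objs = foldl anc_step {} objs"

end

(*
  Charge every point that ANC adds to a point h of the offline hitting set H lying in the
  ball that triggered it. A ball of radius rho in [1, M] is handled at level
  i = floor (log2 (rho / sqrt d)); its point p lies on the grid of step s = 2^(i+1), within
  s/2 of the center in every coordinate, and the center is at distance less than sqrt d * s
  from h. So p/s is a lattice point whose unit cube meets the Euclidean ball of radius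
  sqrt d about h/s, and there are at most floor (2 sqrt d + 2)^d such points per level.

  The levels take at most floor (log2 M) + 2 values. When they take that many, the bottom
  grid step s0 lies in (1/sqrt d, 2/sqrt d) and the top level only sees balls of radius at
  most 1/s0 of its own grid step, so the two extreme levels together still fit into the
  budget of a single level: by an exponential moment (Chernoff) bound on the number of
  lattice cells meeting a ball when d >= 7, and by direct counting for small d. In the
  plane direct counting falls one point short. The missing point comes from the online
  behaviour of ANC: when it adds the point h itself, the triggering ball also contains a
  lattice neighbour of h, which is then never charged to h.
*)

theory Submission
  imports Defs
begin

section \<open>The point ANC adds for a Euclidean ball\<close>

lemma norm_vec_power2: "(norm (x::real^'n))\<^sup>2 = (\<Sum>j\<in>UNIV. (x$j)\<^sup>2)"
  by (simp add: norm_vec_def L2_set_def sum_nonneg)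

lemma abs_component_diff_le_linf_dist: "\<bar>x$j - y$j\<bar> \<le> linf_dist x (y::real^'n)"
  unfolding linf_dist_def by (rule Max_ge) auto

lemma sphere_linf_dist_lower_bound:
  fixes c z :: "real^'n"
  assumes "z \<in> sphere c \<rho>"
  shows "\<rho> / sqrt (real CARD('n)) \<le> linf_dist c z"
proof -
  let ?d = "real CARD('n)" and ?m = "linf_dist c z"
  have m_nonneg: "?m \<ge> 0"
    by (meson abs_ge_zero abs_component_diff_le_linf_dist order_trans)
  have "\<rho>\<^sup>2 = (dist c z)\<^sup>2" using assms by simp
  also have "\<dots> = (\<Sum>j\<in>UNIV. (c$j - z$j)\<^sup>2)" by (simp add: dist_norm norm_vec_power2)
  also have "\<dots> \<le> (\<Sum>j\<in>(UNIV::'n set). ?m\<^sup>2)"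
  proof (rule sum_mono)
    fix j
    have "\<bar>c$j - z$j\<bar> \<le> \<bar>?m\<bar>" using abs_component_diff_le_linf_dist m_nonneg by simp
    then show "(c$j - z$j)\<^sup>2 \<le> ?m\<^sup>2" by (simp add: abs_le_square_iff)
  qed
  also have "\<dots> = (sqrt ?d * ?m)\<^sup>2" by (simp add: power_mult_distrib)
  finally have "\<rho> \<le> sqrt ?d * ?m"
    using m_nonneg by (meson power2_le_imp_le real_sqrt_ge_zero of_nat_0_le_iff mult_nonneg_nonneg)
  then show ?thesis by (simp add: divide_le_eq mult.commute)
qed

lemma width_cball:
  fixes c :: "real^'n"
  assumes "\<rho> > 0"
  shows "width (cball c \<rho>) c = \<rho> / sqrt (real CARD('n))"
proof -
  let ?w = "\<rho> / sqrt (real CARD('n))"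
  define y where "y = c + (\<chi> j. ?w)"
  have "(dist c y)\<^sup>2 = \<rho>\<^sup>2"
    by (simp add: y_def dist_norm norm_vec_power2 power_divide)
  then have y_sphere: "y \<in> sphere c \<rho>"
    using assms by (simp add: power2_eq_iff_nonneg)
  have "linf_dist c y = ?w"
  proof -
    have "range (\<lambda>j. \<bar>c$j - y$j\<bar>) = {?w}" using assms by (auto simp: y_def)
    then show ?thesis unfolding linf_dist_def by simp
  qed
  then have "Inf (linf_dist c ` sphere c \<rho>) = ?w"
    using y_sphere sphere_linf_dist_lower_bound[of _ c \<rho>] by (intro cInf_eq_minimum) force+
  then show ?thesis unfolding width_def using assms by simp
qed

definition grid_step :: "int \<Rightarrow> real" where
  "grid_step i = 2 powr (of_int i + 1)"

lemma grid_step_pos [simp]: "grid_step i > 0"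
  unfolding grid_step_def by simp

lemma grid_step_nonneg [simp]: "grid_step i \<ge> 0"
  using grid_step_pos[of i] by linarith

lemma grid_step_nonzero [simp]: "grid_step i \<noteq> 0"
  using grid_step_pos[of i] by linarith

lemma grid_step_add: "grid_step (i + j + 1) = grid_step i * grid_step j"
  unfolding grid_step_def by (simp add: powr_add[symmetric] algebra_simps)

lemma grid_step_floor_log:
  assumes "w > 0"
  shows "grid_step \<lfloor>log 2 w\<rfloor> \<le> 2 * w" "w < grid_step \<lfloor>log 2 w\<rfloor>"
proof -
  have w: "w = 2 powr (log 2 w)" using assms by simp
  have "2 powr (of_int \<lfloor>log 2 w\<rfloor>) \<le> w"
    by (subst (2) w, rule powr_mono) auto
  then show "grid_step \<lfloor>log 2 w\<rfloor> \<le> 2 * w"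
    unfolding grid_step_def by (simp add: powr_add)
  show "w < grid_step \<lfloor>log 2 w\<rfloor>"
    unfolding grid_step_def by (subst (1) w, rule powr_less_mono) auto
qed

lemma grid_step_cases:
  obtains "grid_step i \<ge> 2" | "i = -1" "grid_step i = 1" | "i = -2" "grid_step i = 1/2"
    | "grid_step i \<le> 1/4"
proof -
  consider "i \<ge> 0" | "i = -1" | "i = -2" | "i \<le> -3" by linarith
  then show ?thesis
  proof cases
    case 1
    then have "2 powr (1::real) \<le> 2 powr (of_int i + 1)" by (intro powr_mono) auto
    then show ?thesis using that(1) unfolding grid_step_def by simp
  next
    case 4
    then have "2 powr (of_int i + 1) \<le> 2 powr (-2::real)" by (intro powr_mono) auto
    then show ?thesis using that(4) unfolding grid_step_def by (simp add: powr_minus_divide)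
  qed (use that in \<open>simp_all add: grid_step_def powr_minus_divide\<close>)
qed

lemma grid_step_eq_one_iff: "grid_step i = 1 \<longleftrightarrow> i = -1"
  unfolding grid_step_def by auto

lemma grid_step_between:
  assumes "1 < r * grid_step i" "r * grid_step i < 2"
  shows "1 \<le> r \<Longrightarrow> r < 2 \<Longrightarrow> grid_step i = 1"
    and "2 \<le> r \<Longrightarrow> r < 4 \<Longrightarrow> grid_step i = 1/2"
proof -
  have big: "r * 2 \<le> r * grid_step i" if "0 \<le> r" "2 \<le> grid_step i"
    using that by (intro mult_left_mono)
  have small: "r * grid_step i \<le> r * (1/4)" if "0 \<le> r" "grid_step i \<le> 1/4"
    using that by (intro mult_left_mono)
  show "grid_step i = 1" if "1 \<le> r" "r < 2"
  proof (cases rule: grid_step_cases[of i])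
    case 1 then show ?thesis using big that assms by linarith
  next
    case 3
    then have "r * grid_step i = r / 2" by simp
    then show ?thesis using that assms by linarith
  next
    case 4 then show ?thesis using small that assms by linarith
  qed simp
  show "grid_step i = 1/2" if "2 \<le> r" "r < 4"
  proof (cases rule: grid_step_cases[of i])
    case 1 then show ?thesis using big that assms by linarith
  next
    case 2
    then have "r * grid_step i = r" by simp
    then show ?thesis using that assms by linarith
  next
    case 4 then show ?thesis using small that assms by linarith
  qed simp
qed

lemma anc_point_component:
  fixes c :: "real^'n" and w :: real
  defines "s \<equiv> grid_step \<lfloor>log 2 w\<rfloor>"
  shows "\<exists>n::int. anc_point c w $ j = s * of_int n" "\<bar>c$j - anc_point c w $ j\<bar> \<le> s / 2"
proof -
  define z where "z = s * of_int \<lfloor>c$j / s\<rfloor>"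
  have s_pos: "s > 0" unfolding s_def by simp
  have "of_int \<lfloor>c$j / s\<rfloor> \<le> c$j / s" "c$j / s < of_int \<lfloor>c$j / s\<rfloor> + 1" by linarith+
  then have "s * of_int \<lfloor>c$j / s\<rfloor> \<le> c$j" "c$j < s * (of_int \<lfloor>c$j / s\<rfloor> + 1)"
    using s_pos by (simp add: le_divide_eq mult.commute, metis mult.commute pos_divide_less_eq)
  then have f: "0 \<le> c$j - z" "c$j - z < s" unfolding z_def by (simp_all add: algebra_simps)
  have half: "2 powr (of_int \<lfloor>log 2 w\<rfloor>) = s / 2"
    unfolding s_def grid_step_def by (simp add: powr_add)
  have val: "anc_point c w $ j = (if c$j - z < s / 2 then z else z + s)"
    unfolding anc_point_def Let_def z_def half by (simp add: s_def grid_step_def)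
  then show "\<bar>c$j - anc_point c w $ j\<bar> \<le> s / 2" using f by auto
  show "\<exists>n::int. anc_point c w $ j = s * of_int n"
  proof (cases "c$j - z < s / 2")
    case True
    then show ?thesis using val unfolding z_def by auto
  next
    case False
    then have "anc_point c w $ j = s * of_int (\<lfloor>c$j / s\<rfloor> + 1)"
      using val unfolding z_def by (simp add: algebra_simps)
    then show ?thesis by blast
  qed
qed

section \<open>Lattice cells near a ball\<close>

text \<open>\<open>cell_dist t n\<close> is the distance from \<open>t\<close> to the interval \<open>[n - 1/2, n + 1/2]\<close>, so
  \<open>m \<in> near_cells \<theta> T\<close> iff the unit cube centered at \<open>m\<close> meets the open ball of radius \<open>T\<close>
  about \<open>\<theta>\<close>.\<close>

definition cell_dist :: "real \<Rightarrow> int \<Rightarrow> real" where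
  "cell_dist t n = max (\<bar>of_int n - t\<bar> - 1/2) 0"

definition near_cells :: "('n::finite \<Rightarrow> real) \<Rightarrow> real \<Rightarrow> ('n \<Rightarrow> int) set" where
  "near_cells \<theta> T = {m. (\<Sum>j\<in>UNIV. (cell_dist (\<theta> j) (m j))\<^sup>2) < T\<^sup>2}"

definition int_window :: "real \<Rightarrow> real \<Rightarrow> int set" where
  "int_window t a = {n. \<bar>of_int n - t\<bar> < a}"

lemma cell_dist_nonneg: "cell_dist t n \<ge> 0"
  unfolding cell_dist_def by simp

lemma int_window_subset: "int_window t a \<subseteq> {\<lfloor>t - a\<rfloor> + 1 ..< \<lfloor>t - a\<rfloor> + 1 + \<lceil>2 * a\<rceil>}"
proof
  fix n assume "n \<in> int_window t a"
  then have "t - a < of_int n" "of_int n < t + a" unfolding int_window_def by auto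
  moreover have "t + a \<le> of_int (\<lfloor>t - a\<rfloor> + 1 + \<lceil>2 * a\<rceil>)" by simp linarith
  ultimately show "n \<in> {\<lfloor>t - a\<rfloor> + 1 ..< \<lfloor>t - a\<rfloor> + 1 + \<lceil>2 * a\<rceil>}" by simp linarith
qed

lemma finite_int_window [simp]: "finite (int_window t a)"
  using int_window_subset finite_subset by blast

lemma card_int_window_le: "card (int_window t a) \<le> nat \<lceil>2 * a\<rceil>"
  using card_mono[OF _ int_window_subset, of t a] by simp

lemma int_window_of_int_subset:
  assumes "a \<le> of_int r + 1"
  shows "int_window (of_int k) a \<subseteq> {k - r..k + r}"
  using assms unfolding int_window_def by auto

lemma near_cells_subset_PiE:
  assumes "T > 0"
  shows "near_cells \<theta> T \<subseteq> PiE UNIV (\<lambda>j. int_window (\<theta> j) (T + 1/2))"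
proof
  fix m assume m: "m \<in> near_cells \<theta> T"
  have "m j \<in> int_window (\<theta> j) (T + 1/2)" for j
  proof -
    have "(cell_dist (\<theta> j) (m j))\<^sup>2 \<le> (\<Sum>j\<in>UNIV. (cell_dist (\<theta> j) (m j))\<^sup>2)"
      by (rule member_le_sum) auto
    also have "\<dots> < T\<^sup>2" using m unfolding near_cells_def by simp
    finally have "cell_dist (\<theta> j) (m j) < T"
      using assms cell_dist_nonneg by (meson power2_less_imp_less less_imp_le)
    then show ?thesis unfolding cell_dist_def int_window_def by auto
  qed
  then show "m \<in> PiE UNIV (\<lambda>j. int_window (\<theta> j) (T + 1/2))" by (simp add: PiE_iff)
qed

lemma finite_near_cells:
  assumes "T > 0" shows "finite (near_cells \<theta> T)"
  by (rule finite_subset[OF near_cells_subset_PiE[OF assms]]) (simp add: finite_PiE)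

lemma card_near_cells_le_prod:
  assumes "T > 0" and "\<And>j. card (int_window (\<theta> j) (T + 1/2)) \<le> b j"
  shows "card (near_cells \<theta> T) \<le> (\<Prod>j\<in>UNIV. b j)"
proof -
  have "card (near_cells \<theta> T) \<le> card (PiE UNIV (\<lambda>j. int_window (\<theta> j) (T + 1/2)))"
    by (rule card_mono[OF _ near_cells_subset_PiE[OF assms(1)]]) (simp add: finite_PiE)
  also have "\<dots> = (\<Prod>j\<in>UNIV. card (int_window (\<theta> j) (T + 1/2)))" by (simp add: card_PiE)
  also have "\<dots> \<le> (\<Prod>j\<in>UNIV. b j)" by (rule prod_mono) (use assms(2) in auto)
  finally show ?thesis .
qed

lemma card_near_cells_le_box:
  fixes \<theta> :: "'n::finite \<Rightarrow> real"
  assumes "T > 0" "T \<le> R"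
  shows "card (near_cells \<theta> T) \<le> nat \<lceil>2 * R + 1\<rceil> ^ CARD('n)"
proof -
  have "nat \<lceil>2 * (T + 1/2)\<rceil> \<le> nat \<lceil>2 * R + 1\<rceil>"
    using assms by (intro nat_mono ceiling_mono) simp
  then have "card (int_window (\<theta> j) (T + 1/2)) \<le> nat \<lceil>2 * R + 1\<rceil>" for j
    using card_int_window_le[of "\<theta> j" "T + 1/2"] by linarith
  then show ?thesis using card_near_cells_le_prod[OF assms(1), of \<theta> "\<lambda>_. nat \<lceil>2 * R + 1\<rceil>"] by simp
qed

lemma card_near_cells_int_center:
  fixes k :: "'n::finite \<Rightarrow> int"
  assumes "T > 0" "T + 1/2 \<le> of_int r + 1"
  shows "card (near_cells (\<lambda>j. of_int (k j)) T) \<le> nat (2 * r + 1) ^ CARD('n)"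
proof -
  have "card (int_window (of_int (k j)) (T + 1/2)) \<le> nat (2 * r + 1)" for j
    using card_mono[OF _ int_window_of_int_subset[OF assms(2), of "k j"]] by simp
  then show ?thesis
    using card_near_cells_le_prod[OF assms(1), of "\<lambda>j. of_int (k j)" "\<lambda>_. nat (2 * r + 1)"] by simp
qed

lemma prod_UNIV_if_eq: "(\<Prod>i\<in>UNIV. if i = j then a else b) = a * b ^ (CARD('n) - 1)"
  for j :: "'n::finite" and a b :: "'a::comm_monoid_mult"
  by (simp add: prod.If_cases Int_absorb1 Compl_eq_Diff_UNIV card_Diff_singleton)

lemma card_near_cells_half_int_coordinate:
  fixes \<theta> :: "'n::finite \<Rightarrow> real"
  assumes "T > 0" "T \<le> 1" and "\<theta> j\<^sub>0 = of_int k + 1/2"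
  shows "card (near_cells \<theta> T) \<le> 2 * 3 ^ (CARD('n) - 1)"
proof -
  have "card (int_window (\<theta> j) (T + 1/2)) \<le> (if j = j\<^sub>0 then 2 else 3)" for j
  proof (cases "j = j\<^sub>0")
    case True
    have "int_window (\<theta> j) (T + 1/2) \<subseteq> {k..k+1}"
      using True assms unfolding int_window_def by auto
    then show ?thesis using True card_mono[of "{k..k+1}"] by fastforce
  next
    case False
    have "nat \<lceil>2 * (T + 1/2)\<rceil> \<le> nat \<lceil>3::real\<rceil>"
      using assms by (intro nat_mono ceiling_mono) simp
    then show ?thesis using False card_int_window_le[of "\<theta> j" "T + 1/2"] by simp
  qed
  then have "card (near_cells \<theta> T) \<le> (\<Prod>j\<in>UNIV. if j = j\<^sub>0 then 2 else 3)"
    by (rule card_near_cells_le_prod[OF assms(1)])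
  also have "\<dots> = 2 * 3 ^ (CARD('n) - 1)" by (rule prod_UNIV_if_eq)
  finally show ?thesis .
qed

text \<open>The rate is chosen so that \<open>cell_weight (j / 2) = (11/12) ^ j\<^sup>2\<close>.\<close>

definition chernoff_rate :: real where
  "chernoff_rate = 4 * ln (12/11)"

definition cell_weight :: "real \<Rightarrow> real" where
  "cell_weight x = exp (- chernoff_rate * x\<^sup>2)"

lemma chernoff_rate_pos: "chernoff_rate > 0"
  unfolding chernoff_rate_def by simp

lemma exp_chernoff_rate_nat: "exp (chernoff_rate * real k) = ((12/11)^4) ^ k"
proof -
  have "exp chernoff_rate = (12/11)^4"
    unfolding chernoff_rate_def by (simp add: exp_of_nat_mult[where n=4, simplified])
  moreover have "exp (chernoff_rate * real k) = exp chernoff_rate ^ k"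
    by (simp add: exp_of_nat_mult[symmetric] mult.commute)
  ultimately show ?thesis by simp
qed

lemma cell_weight_nonneg: "cell_weight x \<ge> 0"
  unfolding cell_weight_def by simp

lemma cell_weight_antimono: "0 \<le> x \<Longrightarrow> x \<le> y \<Longrightarrow> cell_weight y \<le> cell_weight x"
  unfolding cell_weight_def using chernoff_rate_pos by (simp add: power_mono mult_left_mono)

lemma cell_weight_half_nat: "cell_weight (real j / 2) = (11/12) ^ j\<^sup>2"
proof -
  have "cell_weight (real j / 2) = inverse (exp (real (j\<^sup>2) * ln (12/11)))"
    unfolding cell_weight_def chernoff_rate_def by (simp add: power2_eq_square exp_minus)
  also have "\<dots> = inverse ((12/11) ^ j\<^sup>2)" by (simp only: exp_of_nat_mult) simp
  finally show ?thesis by (simp flip: power_inverse)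
qed

lemma cell_dist_pair:
  fixes t :: real
  assumes "k \<ge> 1"
  defines "n\<^sub>0 \<equiv> \<lfloor>t + 1/2\<rfloor>"
  shows "cell_dist t (n\<^sub>0 + int k) \<ge> real k - 1" "cell_dist t (n\<^sub>0 - int k) \<ge> real k - 1"
    "cell_dist t (n\<^sub>0 + int k) + cell_dist t (n\<^sub>0 - int k) = 2 * real k - 1"
proof -
  have "-1/2 < of_int n\<^sub>0 - t" "of_int n\<^sub>0 - t \<le> 1/2" unfolding n\<^sub>0_def by linarith+
  then have "cell_dist t (n\<^sub>0 + int k) = real k + (of_int n\<^sub>0 - t) - 1/2"
    "cell_dist t (n\<^sub>0 - int k) = real k - (of_int n\<^sub>0 - t) - 1/2"
    using assms unfolding cell_dist_def by auto
  then show "cell_dist t (n\<^sub>0 + int k) \<ge> real k - 1" "cell_dist t (n\<^sub>0 - int k) \<ge> real k - 1"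
    "cell_dist t (n\<^sub>0 + int k) + cell_dist t (n\<^sub>0 - int k) = 2 * real k - 1"
    using \<open>-1/2 < of_int n\<^sub>0 - t\<close> \<open>of_int n\<^sub>0 - t \<le> 1/2\<close> by auto
qed

text \<open>By \<open>cell_dist_pair\<close> the weights of the two cells at offset \<open>\<plusminus>k\<close> from the nearest cell
  are dominated by the weights of the distances \<open>k - 1\<close> and \<open>k - 1/2\<close>.\<close>

lemma cell_weight_pair:
  fixes t :: real
  assumes "k \<ge> 1"
  defines "n\<^sub>0 \<equiv> \<lfloor>t + 1/2\<rfloor>"
  shows "cell_weight (cell_dist t (n\<^sub>0 + int k)) + cell_weight (cell_dist t (n\<^sub>0 - int k))
         \<le> (11/12) ^ (2*k - 2)\<^sup>2 + (11/12) ^ (2*k - 1)\<^sup>2"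
proof -
  let ?u = "cell_dist t (n\<^sub>0 + int k)" and ?v = "cell_dist t (n\<^sub>0 - int k)"
  have u: "?u \<ge> real k - 1" and v: "?v \<ge> real k - 1" and uv: "?u + ?v = 2 * real k - 1"
    using cell_dist_pair[OF assms(1), of t] unfolding n\<^sub>0_def by auto
  have "real k - 1 = real (2*k - 2) / 2" "real k - 1/2 = real (2*k - 1) / 2"
    using assms by (simp_all add: of_nat_diff)
  then have w: "cell_weight (real k - 1) = (11/12) ^ (2*k - 2)\<^sup>2"
    "cell_weight (real k - 1/2) = (11/12) ^ (2*k - 1)\<^sup>2"
    by (simp_all only: cell_weight_half_nat)
  have "cell_weight ?u + cell_weight ?v \<le> cell_weight (real k - 1) + cell_weight (real k - 1/2)"
  proof (cases "?u \<le> ?v")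
    case True
    then show ?thesis using u uv assms
      by (intro add_mono cell_weight_antimono) auto
  next
    case False
    then show ?thesis using v uv assms
      by (subst add.commute, intro add_mono cell_weight_antimono) auto
  qed
  then show ?thesis using w by simp
qed

lemma sum_cell_weight_interval:
  fixes t :: real
  defines "n\<^sub>0 \<equiv> \<lfloor>t + 1/2\<rfloor>"
  shows "(\<Sum>n\<in>{n\<^sub>0 - int N..n\<^sub>0 + int N}. cell_weight (cell_dist t n)) \<le> 1 + (\<Sum>j<2*N. (11/12) ^ j\<^sup>2)"
proof (induction N)
  case 0
  have "cell_dist t n\<^sub>0 = 0" unfolding cell_dist_def n\<^sub>0_def by linarith
  then show ?case by (simp add: cell_weight_def)
next
  case (Suc N)
  have "{n\<^sub>0 - int (Suc N)..n\<^sub>0 + int (Suc N)}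
      = insert (n\<^sub>0 - int (Suc N)) (insert (n\<^sub>0 + int (Suc N)) {n\<^sub>0 - int N..n\<^sub>0 + int N})"
    by auto
  then show ?case
    using cell_weight_pair[of "Suc N" t] Suc.IH unfolding n\<^sub>0_def by simp
qed

lemma sum_power_square_le: "(\<Sum>j<N. (11/12::real) ^ j\<^sup>2) \<le> 351/100"
proof -
  let ?q = "11/12::real"
  define k where "k = N - 8"
  have "(\<Sum>j<N. ?q ^ j\<^sup>2) \<le> (\<Sum>j<8 + k. ?q ^ j\<^sup>2)"
    by (rule sum_mono2) (auto simp: k_def)
  also have "\<dots> = (\<Sum>j<8. ?q ^ j\<^sup>2) + (\<Sum>i<k. ?q ^ (8 + i)\<^sup>2)"
  proof -
    have "(\<Sum>j<a + k. f j) = (\<Sum>j<a. f j) + (\<Sum>i<k. f (a + i))" for a and f :: "nat \<Rightarrow> real"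
      by (induction k) auto
    then show ?thesis .
  qed
  also have "(\<Sum>i<k. ?q ^ (8 + i)\<^sup>2) \<le> (\<Sum>i<k. ?q ^ 64 * (?q ^ 8) ^ i)"
  proof (rule sum_mono)
    fix i :: nat
    have "64 + 8 * i \<le> (8 + i)\<^sup>2" by (simp add: power2_eq_square algebra_simps)
    then have "?q ^ (8 + i)\<^sup>2 \<le> ?q ^ (64 + 8 * i)" by (intro power_decreasing) auto
    then show "?q ^ (8 + i)\<^sup>2 \<le> ?q ^ 64 * (?q ^ 8) ^ i" by (simp add: power_add power_mult)
  qed
  also have "\<dots> = ?q ^ 64 * ((1 - (?q ^ 8) ^ k) / (1 - ?q ^ 8))"
  proof -
    have "?q ^ 8 \<noteq> 1" by (simp add: power_divide)
    then show ?thesis by (simp only: sum_distrib_left[symmetric] sum_gp_strict if_False)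
  qed
  also have "\<dots> \<le> ?q ^ 64 * (1 / (1 - ?q ^ 8))"
  proof -
    have "0 \<le> ?q ^ 8" "?q ^ 8 < 1" by (simp_all add: power_less_one_iff)
    then have "(1 - (?q ^ 8) ^ k) / (1 - ?q ^ 8) \<le> 1 / (1 - ?q ^ 8)"
      by (intro divide_right_mono) auto
    then show ?thesis by (rule mult_left_mono) simp
  qed
  finally show ?thesis
    by (simp add: lessThan_nat_numeral power2_eq_square power_divide)
qed

lemma finite_int_set_subset_interval:
  fixes A :: "int set"
  assumes "finite A" shows "\<exists>N::nat. A \<subseteq> {c - int N..c + int N}"
  using assms
proof (induction A rule: finite_induct)
  case (insert a A)
  then obtain N where "A \<subseteq> {c - int N..c + int N}" by auto
  then have "insert a A \<subseteq> {c - int (max N (nat \<bar>a - c\<bar>))..c + int (max N (nat \<bar>a - c\<bar>))}"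
    by force
  then show ?case by blast
qed simp

lemma sum_cell_weight_le:
  assumes "finite A"
  shows "(\<Sum>n\<in>A. cell_weight (cell_dist t n)) \<le> 451/100"
proof -
  define n\<^sub>0 where "n\<^sub>0 = \<lfloor>t + 1/2\<rfloor>"
  obtain N :: nat where N: "A \<subseteq> {n\<^sub>0 - int N..n\<^sub>0 + int N}"
    using finite_int_set_subset_interval[OF assms] by blast
  have "(\<Sum>n\<in>A. cell_weight (cell_dist t n)) \<le> (\<Sum>n\<in>{n\<^sub>0 - int N..n\<^sub>0 + int N}. cell_weight (cell_dist t n))"
    by (rule sum_mono2[OF _ N]) (auto simp: cell_weight_nonneg)
  also have "\<dots> \<le> 1 + (\<Sum>j<2*N. (11/12) ^ j\<^sup>2)"
    unfolding n\<^sub>0_def by (rule sum_cell_weight_interval)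
  finally show ?thesis using sum_power_square_le[of "2*N"] by simp
qed

text \<open>Every \<open>m \<in> near_cells \<theta> T\<close> contributes at least one to
  \<open>\<Sum>\<^sub>m exp (chernoff_rate * (T\<^sup>2 - \<Sum>\<^sub>j cell_dist\<^sup>2))\<close>, and over the whole box this sum
  factorises into one-dimensional sums bounded by \<open>sum_cell_weight_le\<close>.\<close>

lemma card_near_cells_exponential:
  fixes \<theta> :: "'n::finite \<Rightarrow> real"
  assumes "T > 0" and "T\<^sup>2 \<le> real CARD('n)"
  shows "real (card (near_cells \<theta> T)) \<le> (641/100) ^ CARD('n)"
proof -
  let ?W = "\<lambda>j. int_window (\<theta> j) (T + 1/2)"
  let ?P = "PiE UNIV ?W"
  let ?S = "\<lambda>m. \<Sum>j\<in>UNIV. (cell_dist (\<theta> j) (m j))\<^sup>2"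
  let ?E = "\<lambda>m. exp (chernoff_rate * (T\<^sup>2 - ?S m))"
  have E_eq: "?E m = exp (chernoff_rate * T\<^sup>2) * (\<Prod>j\<in>UNIV. cell_weight (cell_dist (\<theta> j) (m j)))"
    for m
  proof -
    have "chernoff_rate * (T\<^sup>2 - ?S m)
        = chernoff_rate * T\<^sup>2 + (\<Sum>j\<in>UNIV. - chernoff_rate * (cell_dist (\<theta> j) (m j))\<^sup>2)"
      by (simp add: sum_distrib_left right_diff_distrib sum_negf)
    then show ?thesis by (simp add: exp_add exp_sum cell_weight_def)
  qed
  have "real (card (near_cells \<theta> T)) = (\<Sum>m\<in>near_cells \<theta> T. 1)" by simp
  also have "\<dots> \<le> (\<Sum>m\<in>near_cells \<theta> T. ?E m)"
    using chernoff_rate_pos by (intro sum_mono) (simp add: near_cells_def)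
  also have "\<dots> \<le> (\<Sum>m\<in>?P. ?E m)"
    by (rule sum_mono2[OF _ near_cells_subset_PiE[OF assms(1)]]) (simp_all add: finite_PiE)
  also have "\<dots> = exp (chernoff_rate * T\<^sup>2) * (\<Prod>j\<in>UNIV. \<Sum>n\<in>?W j. cell_weight (cell_dist (\<theta> j) n))"
    by (simp add: E_eq sum_distrib_left[symmetric] prod_sum_PiE)
  also have "\<dots> \<le> exp (chernoff_rate * real CARD('n)) * (451/100) ^ CARD('n)"
    using assms(2) chernoff_rate_pos
    by (intro mult_mono prod_le_power) (auto intro!: sum_nonneg prod_nonneg cell_weight_nonneg
        sum_cell_weight_le simp del: divide_const_simps)
  also have "\<dots> = ((12/11)^4 * (451/100)) ^ CARD('n)"
    by (simp only: exp_chernoff_rate_nat power_mult_distrib)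
  also have "\<dots> \<le> (641/100) ^ CARD('n)" by (rule power_mono) (auto simp: power_divide)
  finally show ?thesis .
qed

lemma near_cells_two_coordinates:
  assumes "m \<in> near_cells \<theta> T" "i \<noteq> j"
  shows "(cell_dist (\<theta> i) (m i))\<^sup>2 + (cell_dist (\<theta> j) (m j))\<^sup>2 < T\<^sup>2"
proof -
  have "(cell_dist (\<theta> i) (m i))\<^sup>2 + (cell_dist (\<theta> j) (m j))\<^sup>2
      = (\<Sum>l\<in>{i, j}. (cell_dist (\<theta> l) (m l))\<^sup>2)" using assms(2) by simp
  also have "\<dots> \<le> (\<Sum>l\<in>UNIV. (cell_dist (\<theta> l) (m l))\<^sup>2)" by (rule sum_mono2) auto
  also have "\<dots> < T\<^sup>2" using assms(1) unfolding near_cells_def by simp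
  finally show ?thesis .
qed

lemma near_cells_int_center_subset:
  fixes k :: "'n::finite \<Rightarrow> int"
  assumes "T > 0" and "T\<^sup>2 \<le> 3"
  shows "near_cells (\<lambda>j. of_int (k j)) T \<subseteq> PiE UNIV (\<lambda>i. {k i - 1..k i + 1}) \<union>
    (\<Union>j. PiE UNIV (\<lambda>i. if i = j then {k i - 2, k i + 2} else {k i - 1..k i + 1}))"
proof
  fix m assume m: "m \<in> near_cells (\<lambda>j. of_int (k j)) T"
  have "T \<le> 2" by (rule power2_le_imp_le) (use assms(2) in simp_all)
  then have "T + 1/2 \<le> of_int 2 + 1" by simp
  then have box: "m i \<in> {k i - 2..k i + 2}" for i
    using near_cells_subset_PiE[OF assms(1)] int_window_of_int_subset m by (fastforce simp: PiE_iff)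
  have far: "cell_dist (of_int (k i)) (m i) = 3/2" if "m i \<notin> {k i - 1..k i + 1}" for i
    using box[of i] that unfolding cell_dist_def by auto
  show "m \<in> PiE UNIV (\<lambda>i. {k i - 1..k i + 1}) \<union>
    (\<Union>j. PiE UNIV (\<lambda>i. if i = j then {k i - 2, k i + 2} else {k i - 1..k i + 1}))"
  proof (cases "\<forall>i. m i \<in> {k i - 1..k i + 1}")
    case False
    then obtain j where j: "m j \<notin> {k j - 1..k j + 1}" by blast
    have "m i \<in> {k i - 1..k i + 1}" if "i \<noteq> j" for i
    proof (rule ccontr)
      assume i: "m i \<notin> {k i - 1..k i + 1}"
      have "(3/2)\<^sup>2 + (3/2)\<^sup>2 < T\<^sup>2"
        using near_cells_two_coordinates[OF m that] unfolding far[OF j] far[OF i] .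
      then show False using assms(2) by (simp add: power2_eq_square)
    qed
    then have "m \<in> PiE UNIV (\<lambda>i. if i = j then {k i - 2, k i + 2} else {k i - 1..k i + 1})"
      using box[of j] j by (auto simp: PiE_iff)
    then show ?thesis by blast
  qed (auto simp: PiE_iff)
qed

lemma card_near_cells_dim3:
  fixes k :: "'n::finite \<Rightarrow> int"
  assumes "CARD('n) = 3" and "T > 0" and "T\<^sup>2 \<le> 3"
  shows "card (near_cells (\<lambda>j. of_int (k j)) T) \<le> 81"
proof -
  let ?Q = "PiE UNIV (\<lambda>i. {k i - 1..k i + 1})"
  let ?P = "\<lambda>j. PiE UNIV (\<lambda>i. if i = j then {k i - 2, k i + 2} else {k i - 1..k i + 1})"
  have "card (near_cells (\<lambda>j. of_int (k j)) T) \<le> card (?Q \<union> (\<Union>j. ?P j))"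
    using near_cells_int_center_subset[OF assms(2,3)] by (rule card_mono[rotated]) (simp add: finite_PiE)
  also have "\<dots> \<le> card ?Q + (\<Sum>j\<in>UNIV. card (?P j))"
    by (rule order_trans[OF card_Un_le add_left_mono[OF card_UN_le]]) simp
  also have "\<dots> = 81"
  proof -
    have "card (if i = j then {k i - 2, k i + 2} else {k i - 1..k i + 1}) = (if i = j then 2 else 3)"
      for i j by simp
    then have "card (?P j) = 2 * 3 ^ (CARD('n) - 1)" for j by (simp add: card_PiE prod_UNIV_if_eq)
    then show ?thesis using assms(1) by (simp add: card_PiE)
  qed
  finally show ?thesis .
qed

lemma card_le_prod_diff_prod:
  fixes A B :: "'n::finite \<Rightarrow> 'a set"
  assumes "\<And>j. finite (A j)" "\<And>j. B j \<subseteq> A j"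
    and "G \<subseteq> PiE UNIV A" "G \<inter> PiE UNIV B = {}"
  shows "card G \<le> (\<Prod>j\<in>UNIV. card (A j)) - (\<Prod>j\<in>UNIV. card (B j))"
proof -
  have sub: "PiE UNIV B \<subseteq> PiE UNIV A" using assms(2) by (auto simp: PiE_iff)
  have fin: "finite (PiE UNIV A)" using assms(1) by (simp add: finite_PiE)
  have "card G \<le> card (PiE UNIV A - PiE UNIV B)"
    by (rule card_mono) (use fin assms(3,4) in auto)
  also have "\<dots> = (\<Prod>j\<in>UNIV. card (A j)) - (\<Prod>j\<in>UNIV. card (B j))"
    using card_Diff_subset[OF finite_subset[OF sub fin] sub] by (simp add: card_PiE)
  finally show ?thesis .
qed

lemma card_near_cells_dim2:
  fixes \<theta> :: "'n::finite \<Rightarrow> real"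
  assumes "UNIV = {j\<^sub>1, j\<^sub>2}" "j\<^sub>1 \<noteq> j\<^sub>2" and "T > 0" "T\<^sup>2 \<le> 2"
  defines "A j \<equiv> int_window (\<theta> j) (T + 1/2)"
    and "B j \<equiv> {n \<in> int_window (\<theta> j) (T + 1/2). 1 \<le> cell_dist (\<theta> j) n}"
  shows "card (near_cells \<theta> T) \<le> card (A j\<^sub>1) * card (A j\<^sub>2) - card (B j\<^sub>1) * card (B j\<^sub>2)"
proof -
  have prod_UNIV: "(\<Prod>j\<in>UNIV. f j) = f j\<^sub>1 * f j\<^sub>2" for f :: "'n \<Rightarrow> nat"
    by (subst assms(1)) (simp add: assms(2))
  have "near_cells \<theta> T \<inter> PiE UNIV B = {}"
  proof (rule ccontr)
    assume "near_cells \<theta> T \<inter> PiE UNIV B \<noteq> {}"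
    then obtain m where m: "m \<in> near_cells \<theta> T" and "\<forall>j. 1 \<le> cell_dist (\<theta> j) (m j)"
      unfolding B_def by (auto simp: PiE_iff)
    then have "1 \<le> (cell_dist (\<theta> j) (m j))\<^sup>2" for j by (simp add: one_le_power)
    from this[of j\<^sub>1] this[of j\<^sub>2] show False
      using near_cells_two_coordinates[OF m assms(2)] assms(4) by linarith
  qed
  then show ?thesis
    using card_le_prod_diff_prod[of A B] near_cells_subset_PiE[OF assms(3), of \<theta>]
    unfolding prod_UNIV A_def B_def by auto
qed

lemma card_int_window_le_far_cells:
  "card (int_window t a) \<le> 3 + card {n \<in> int_window t a. 1 \<le> cell_dist t n}"
proof -
  let ?A = "int_window t a" and ?B = "{n \<in> int_window t a. 1 \<le> cell_dist t n}"
  have "?A - ?B \<subseteq> int_window t (3/2)"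
    unfolding int_window_def cell_dist_def by auto
  then have "card (?A - ?B) \<le> 3"
    using card_mono[OF _ \<open>?A - ?B \<subseteq> _\<close>] card_int_window_le[of t "3/2"] by simp
  moreover have "card ?A = card (?A - ?B) + card ?B"
    by (simp add: card_Diff_subset card_mono)
  ultimately show ?thesis by linarith
qed

lemma card_int_window_half_int_le_far_cells:
  "card (int_window (of_int k + 1/2) a) \<le> 2 + card {n \<in> int_window (of_int k + 1/2) a. 1 \<le> cell_dist (of_int k + 1/2) n}"
proof -
  let ?A = "int_window (of_int k + 1/2) a"
  let ?B = "{n \<in> ?A. 1 \<le> cell_dist (of_int k + 1/2) n}"
  have "?A - ?B \<subseteq> {k..k+1}"
    unfolding int_window_def cell_dist_def by auto
  then have "card (?A - ?B) \<le> 2" using card_mono[of "{k..k+1}"] by fastforce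
  moreover have "card ?A = card (?A - ?B) + card ?B"
    by (simp add: card_Diff_subset card_mono)
  ultimately show ?thesis by linarith
qed

lemma mult_diff_mult_le_max:
  fixes a\<^sub>1 a\<^sub>2 b\<^sub>1 b\<^sub>2 r :: nat
  assumes "a\<^sub>1 \<le> 4" "a\<^sub>2 \<le> 4" "a\<^sub>1 = 4 \<Longrightarrow> r \<le> b\<^sub>1" "a\<^sub>2 = 4 \<Longrightarrow> r \<le> b\<^sub>2"
  shows "a\<^sub>1 * a\<^sub>2 - b\<^sub>1 * b\<^sub>2 \<le> max 12 (16 - r\<^sup>2)"
proof -
  consider "a\<^sub>1 \<le> 3" | "a\<^sub>2 \<le> 3" | "a\<^sub>1 = 4" "a\<^sub>2 = 4" using assms(1,2) by linarith
  then show ?thesis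
  proof cases
    case 1
    then have "a\<^sub>1 * a\<^sub>2 \<le> 3 * 4" using assms(2) by (rule mult_le_mono)
    then show ?thesis by linarith
  next
    case 2
    then have "a\<^sub>1 * a\<^sub>2 \<le> 4 * 3" using assms(1) by (intro mult_le_mono)
    then show ?thesis by linarith
  next
    case 3
    then have "r * r \<le> b\<^sub>1 * b\<^sub>2" using assms(3,4) by (intro mult_le_mono)
    then show ?thesis using 3 by (simp add: power2_eq_square)
  qed
qed

lemma card_near_cells_dim2_le:
  fixes \<theta> :: "'n::finite \<Rightarrow> real"
  assumes "CARD('n) = 2" and "T > 0" "T\<^sup>2 \<le> 2"
    and "\<And>j. card (int_window (\<theta> j) (T + 1/2)) = 4 \<Longrightarrow>
      r \<le> card {n \<in> int_window (\<theta> j) (T + 1/2). 1 \<le> cell_dist (\<theta> j) n}"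
  shows "card (near_cells \<theta> T) \<le> max 12 (16 - r\<^sup>2)"
proof -
  obtain j\<^sub>1 j\<^sub>2 :: 'n where j: "j\<^sub>1 \<noteq> j\<^sub>2" "UNIV = {j\<^sub>1, j\<^sub>2}"
    using assms(1) card_2_iff by metis
  have "T \<le> 3/2" by (rule power2_le_imp_le) (use assms(3) in \<open>simp_all add: power2_eq_square\<close>)
  then have "nat \<lceil>2 * (T + 1/2)\<rceil> \<le> nat \<lceil>4::real\<rceil>" by (intro nat_mono ceiling_mono) simp
  then have "card (int_window (\<theta> j) (T + 1/2)) \<le> 4" for j
    using card_int_window_le[of "\<theta> j" "T + 1/2"] by simp
  then show ?thesis
    using card_near_cells_dim2[OF j(2,1) assms(2,3)] mult_diff_mult_le_max[OF _ _ assms(4) assms(4)]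
    by (meson order_trans)
qed

lemma card_near_cells_dim2_le_15:
  fixes \<theta> :: "'n::finite \<Rightarrow> real"
  assumes "CARD('n) = 2" and "T > 0" "T\<^sup>2 \<le> 2"
  shows "card (near_cells \<theta> T) \<le> 15"
proof -
  have "card (near_cells \<theta> T) \<le> max 12 (16 - 1\<^sup>2)"
  proof (rule card_near_cells_dim2_le[OF assms])
    fix j
    show "1 \<le> card {n \<in> int_window (\<theta> j) (T + 1/2). 1 \<le> cell_dist (\<theta> j) n}"
      if "card (int_window (\<theta> j) (T + 1/2)) = 4"
      using that card_int_window_le_far_cells[of "\<theta> j" "T + 1/2"] by linarith
  qed
  then show ?thesis by simp
qed

lemma card_near_cells_dim2_half_int_le_12:
  fixes k :: "'n::finite \<Rightarrow> int"
  assumes "CARD('n) = 2" and "T > 0" "T\<^sup>2 \<le> 2"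
  shows "card (near_cells (\<lambda>j. of_int (k j) / 2) T) \<le> 12"
proof -
  have "T \<le> 3/2" by (rule power2_le_imp_le) (use assms(3) in \<open>simp_all add: power2_eq_square\<close>)
  have "2 \<le> card {n \<in> int_window (of_int (k j) / 2) (T + 1/2). 1 \<le> cell_dist (of_int (k j) / 2) n}"
    if four: "card (int_window (of_int (k j) / 2) (T + 1/2)) = 4" for j
  proof (cases "even (k j)")
    case True
    then have "of_int (k j) / 2 = (of_int (k j div 2) :: real)" by (auto elim!: evenE)
    then have "card (int_window (of_int (k j) / 2) (T + 1/2)) \<le> card {k j div 2 - 1..k j div 2 + 1}"
      using int_window_of_int_subset[of "T + 1/2" 1 "k j div 2"] \<open>T \<le> 3/2\<close>
      by (intro card_mono) auto
    then show ?thesis using four by simp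
  next
    case False
    then have half: "of_int (k j) / 2 = (of_int (k j div 2) + 1/2 :: real)" by (auto elim!: oddE)
    show ?thesis
      using four card_int_window_half_int_le_far_cells[of "k j div 2" "T + 1/2"]
      unfolding half by linarith
  qed
  then have "card (near_cells (\<lambda>j. of_int (k j) / 2) T) \<le> max 12 (16 - 2\<^sup>2)"
    by (intro card_near_cells_dim2_le[OF assms])
  then show ?thesis by simp
qed

section \<open>Levels\<close>

definition anc_candidates :: "real \<Rightarrow> real^'n \<Rightarrow> (real^'n) set" where
  "anc_candidates M h =
     {anc_point c (\<rho> / sqrt (real CARD('n))) | c \<rho>. 1 \<le> \<rho> \<and> \<rho> \<le> M \<and> dist c h \<le> \<rho>}"

definition grid_points_near :: "real^'n \<Rightarrow> int \<Rightarrow> real \<Rightarrow> (real^'n) set" where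
  "grid_points_near h i T =
     (\<lambda>m. \<chi> j. grid_step i * of_int (m j)) ` near_cells (\<lambda>j. h$j / grid_step i) T"

text \<open>A ball of radius \<open>\<rho> \<in> [1, M]\<close> is handled at level \<open>i = \<lfloor>log 2 (\<rho> / \<surd>d)\<rfloor>\<close>, where
  \<open>\<rho> < \<surd>d * grid_step i\<close>; also \<open>\<rho> \<le> M < grid_step \<lfloor>log 2 M\<rfloor>\<close>. The level radius is the
  resulting bound on \<open>\<rho>\<close> in units of \<open>grid_step i\<close>.\<close>

definition level_radius :: "nat \<Rightarrow> real \<Rightarrow> int \<Rightarrow> real" where
  "level_radius d M i = min (sqrt (real d)) (grid_step \<lfloor>log 2 M\<rfloor> / grid_step i)"

lemma level_radius_pos: "d > 0 \<Longrightarrow> level_radius d M i > 0"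
  unfolding level_radius_def by simp

lemma level_radius_le_sqrt: "level_radius d M i \<le> sqrt (real d)"
  unfolding level_radius_def by simp

lemma finite_grid_points_near: "T > 0 \<Longrightarrow> finite (grid_points_near h i T)"
  unfolding grid_points_near_def by (simp add: finite_near_cells)

lemma card_grid_points_near_le:
  "T > 0 \<Longrightarrow> card (grid_points_near h i T) \<le> card (near_cells (\<lambda>j. h$j / grid_step i) T)"
  unfolding grid_points_near_def by (intro card_image_le finite_near_cells)

lemma in_grid_points_near:
  fixes c h p :: "real^'n"
  assumes "\<And>j. \<exists>n::int. p$j = grid_step i * of_int n" "\<And>j. \<bar>c$j - p$j\<bar> \<le> grid_step i / 2"
    and "dist c h < T * grid_step i"
  shows "p \<in> grid_points_near h i T"
proof -
  let ?s = "grid_step i"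
  obtain m where m: "\<And>j. p$j = ?s * of_int (m j)" using assms(1) by metis
  have "cell_dist (h$j / ?s) (m j) \<le> \<bar>c$j - h$j\<bar> / ?s" for j
  proof -
    have "of_int (m j) - h$j / ?s = (p$j - h$j) / ?s" using m[of j] by (simp add: diff_divide_distrib)
    then have "\<bar>of_int (m j) - h$j / ?s\<bar> = \<bar>p$j - h$j\<bar> / ?s" by (simp add: abs_divide abs_of_pos)
    also have "\<dots> \<le> (\<bar>p$j - c$j\<bar> + \<bar>c$j - h$j\<bar>) / ?s"
      by (intro divide_right_mono) auto
    also have "\<dots> \<le> 1/2 + \<bar>c$j - h$j\<bar> / ?s"
      using assms(2)[of j] by (simp add: add_divide_distrib abs_minus_commute)
    finally show ?thesis unfolding cell_dist_def by simp
  qed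
  then have "(\<Sum>j\<in>UNIV. (cell_dist (h$j / ?s) (m j))\<^sup>2) \<le> (\<Sum>j\<in>UNIV. (\<bar>c$j - h$j\<bar> / ?s)\<^sup>2)"
    by (intro sum_mono power_mono) (simp_all add: cell_dist_nonneg)
  also have "\<dots> = (dist c h / ?s)\<^sup>2"
    by (simp add: power_divide sum_divide_distrib dist_norm norm_vec_power2)
  also have "\<dots> < T\<^sup>2"
    using assms(3) by (intro power_strict_mono) (simp_all add: pos_divide_less_eq)
  finally have "m \<in> near_cells (\<lambda>j. h$j / ?s) T" unfolding near_cells_def by simp
  moreover have "p = (\<chi> j. ?s * of_int (m j))" using m by (simp add: vec_eq_iff)
  ultimately show ?thesis unfolding grid_points_near_def by blast
qed

lemma anc_candidates_subset_levels:
  fixes h :: "real^'n"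
  assumes "M > 1"
  defines "d \<equiv> CARD('n)"
  shows "anc_candidates M h \<subseteq> (\<Union>i\<in>{\<lfloor>log 2 (1 / sqrt d)\<rfloor>..\<lfloor>log 2 (M / sqrt d)\<rfloor>}.
            grid_points_near h i (level_radius d M i))"
proof
  fix p assume "p \<in> anc_candidates M h"
  then obtain c \<rho> where p: "p = anc_point c (\<rho> / sqrt d)" and \<rho>: "1 \<le> \<rho>" "\<rho> \<le> M"
    and c: "dist c h \<le> \<rho>"
    unfolding anc_candidates_def d_def by blast
  define i where "i = \<lfloor>log 2 (\<rho> / sqrt d)\<rfloor>"
  have sqrt_d: "sqrt d > 0" unfolding d_def by simp
  have "\<lfloor>log 2 (1 / sqrt d)\<rfloor> \<le> i" "i \<le> \<lfloor>log 2 (M / sqrt d)\<rfloor>"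
    unfolding i_def using \<rho> sqrt_d by (auto intro!: floor_mono log_mono divide_right_mono)
  moreover have "dist c h < level_radius d M i * grid_step i"
  proof -
    have "\<rho> / sqrt d < grid_step i"
      unfolding i_def using \<rho> sqrt_d by (intro grid_step_floor_log(2)) simp
    then have "\<rho> < sqrt d * grid_step i" using sqrt_d by (simp add: pos_divide_less_eq mult.commute)
    moreover have "\<rho> < grid_step \<lfloor>log 2 M\<rfloor>" using \<rho> grid_step_floor_log(2)[of M] by simp
    ultimately show ?thesis
      using c unfolding level_radius_def
      by (cases "sqrt d \<le> grid_step \<lfloor>log 2 M\<rfloor> / grid_step i") (simp_all add: min_def)
  qed
  then have "p \<in> grid_points_near h i (level_radius d M i)"
    using anc_point_component[where c=c and w="\<rho> / sqrt d"] unfolding p i_def by (intro in_grid_points_near) auto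
  ultimately show "p \<in> (\<Union>i\<in>{\<lfloor>log 2 (1 / sqrt d)\<rfloor>..\<lfloor>log 2 (M / sqrt d)\<rfloor>}.
            grid_points_near h i (level_radius d M i))" by auto
qed

lemma card_near_cells_level_le:
  fixes \<theta> :: "'n::finite \<Rightarrow> real"
  assumes "0 < T" "T \<le> sqrt (real CARD('n))"
  shows "real (card (near_cells \<theta> T)) \<le> of_int \<lfloor>2 * sqrt (real CARD('n)) + 2\<rfloor> ^ CARD('n)"
proof -
  let ?r = "2 * sqrt (real CARD('n))"
  have "card (near_cells \<theta> T) \<le> nat \<lceil>?r + 1\<rceil> ^ CARD('n)"
    using card_near_cells_le_box[OF assms] by simp
  also have "\<dots> \<le> nat \<lfloor>?r + 2\<rfloor> ^ CARD('n)"
    by (intro power_mono nat_mono) linarith+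
  finally have "real (card (near_cells \<theta> T)) \<le> real (nat \<lfloor>?r + 2\<rfloor> ^ CARD('n))"
    by (rule of_nat_mono)
  moreover have "0 \<le> \<lfloor>?r + 2\<rfloor>" by simp
  ultimately show ?thesis by simp
qed

lemma level_index_range:
  assumes "M > 1" "d > 0"
  defines "i\<^sub>0 \<equiv> \<lfloor>log 2 (1 / sqrt d)\<rfloor>" and "i\<^sub>1 \<equiv> \<lfloor>log 2 (M / sqrt d)\<rfloor>"
  shows "i\<^sub>0 \<le> i\<^sub>1" "i\<^sub>1 \<le> i\<^sub>0 + \<lfloor>log 2 M\<rfloor> + 1"
proof -
  have sqrt_d: "sqrt d > 0" using assms(2) by simp
  show "i\<^sub>0 \<le> i\<^sub>1"
    unfolding i\<^sub>0_def i\<^sub>1_def using assms(1) sqrt_d by (auto intro!: floor_mono log_mono divide_right_mono)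
  have "log 2 (M / sqrt d) = log 2 M + log 2 (1 / sqrt d)"
    using assms(1) sqrt_d by (simp add: log_divide_pos log_recip)
  then show "i\<^sub>1 \<le> i\<^sub>0 + \<lfloor>log 2 M\<rfloor> + 1"
    unfolding i\<^sub>0_def i\<^sub>1_def by linarith
qed

lemma extreme_levels:
  assumes "M > 1" "d > 0"
  defines "i\<^sub>0 \<equiv> \<lfloor>log 2 (1 / sqrt d)\<rfloor>" and "i\<^sub>1 \<equiv> \<lfloor>log 2 (M / sqrt d)\<rfloor>"
  assumes "i\<^sub>1 = i\<^sub>0 + \<lfloor>log 2 M\<rfloor> + 1"
  shows "1 < sqrt d * grid_step i\<^sub>0" "sqrt d * grid_step i\<^sub>0 < 2"
    "level_radius d M i\<^sub>1 \<le> 1 / grid_step i\<^sub>0"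
proof -
  let ?L = "\<lfloor>log 2 M\<rfloor>"
  have sqrt_d: "sqrt d > 0" using assms(2) by simp
  have "1 / sqrt d < grid_step i\<^sub>0" unfolding i\<^sub>0_def using sqrt_d by (intro grid_step_floor_log) simp
  then show "1 < sqrt d * grid_step i\<^sub>0" using sqrt_d by (simp add: divide_less_eq mult.commute)
  have split: "grid_step i\<^sub>1 = grid_step i\<^sub>0 * grid_step ?L"
    unfolding assms(5) by (rule grid_step_add)
  have "grid_step i\<^sub>1 \<le> 2 * (M / sqrt d)"
    unfolding i\<^sub>1_def using assms(1) sqrt_d by (intro grid_step_floor_log) simp
  then have "sqrt d * grid_step i\<^sub>1 \<le> 2 * M" using sqrt_d by (simp add: field_simps)
  also have "\<dots> < 2 * grid_step ?L" using grid_step_floor_log(2)[of M] assms(1) by simp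
  finally have "(sqrt d * grid_step i\<^sub>0) * grid_step ?L < 2 * grid_step ?L"
    unfolding split by (simp add: mult.assoc)
  then show "sqrt d * grid_step i\<^sub>0 < 2" by simp
  have "level_radius d M i\<^sub>1 \<le> grid_step ?L / grid_step i\<^sub>1" unfolding level_radius_def by simp
  also have "\<dots> = 1 / grid_step i\<^sub>0" unfolding split by simp
  finally show "level_radius d M i\<^sub>1 \<le> 1 / grid_step i\<^sub>0" .
qed

lemma le_floor_box_power:
  fixes c :: nat
  assumes "x \<le> real c ^ d" "(real c - 2)\<^sup>2 \<le> 4 * real d"
  shows "x \<le> of_int \<lfloor>2 * sqrt (real d) + 2\<rfloor> ^ d"
proof -
  have "(real c - 2) / 2 \<le> sqrt (real d)"
    using assms(2) by (intro real_le_rsqrt) (simp add: power_divide)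
  then have "real c \<le> 2 * sqrt (real d) + 2" by (simp add: field_simps)
  then have "int c \<le> \<lfloor>2 * sqrt (real d) + 2\<rfloor>" by (simp only: le_floor_iff)
  then have "real c ^ d \<le> of_int \<lfloor>2 * sqrt (real d) + 2\<rfloor> ^ d"
    by (intro power_mono) (simp_all add: of_int_le_iff[symmetric])
  with assms(1) show ?thesis by linarith
qed

lemma two_mult_power_le_7_power:
  assumes "8 \<le> n"
  shows "2 * (641/100::real) ^ n \<le> 7 ^ n"
proof -
  obtain m where n: "n = 8 + m" using assms by (metis le_add_diff_inverse)
  have "2 * (641/100::real) ^ 8 \<le> 7 ^ 8" by (simp add: power_divide)
  moreover have "(641/100::real) ^ m \<le> 7 ^ m" by (rule power_mono) auto
  ultimately have "(2 * (641/100::real) ^ 8) * (641/100) ^ m \<le> 7 ^ 8 * 7 ^ m"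
    by (rule mult_mono) auto
  then show ?thesis unfolding n by (simp only: power_add mult.assoc)
qed

text \<open>The two extreme levels when the levels take \<open>\<lfloor>log 2 M\<rfloor> + 2\<close> values: the bottom one,
  with grid step \<open>grid_step i\<close>, and the top one, whose radius is at most \<open>1 / grid_step i\<close>
  (see \<open>extreme_levels\<close>). Together they contribute no more than one ordinary level.\<close>

context
  fixes i :: int and T\<^sub>b T\<^sub>t :: real
  assumes bottom_step: "1 < sqrt (real CARD('n::finite)) * grid_step i"
      "sqrt (real CARD('n)) * grid_step i < 2"
    and radii: "0 < T\<^sub>b" "T\<^sub>b \<le> sqrt (real CARD('n))" "0 < T\<^sub>t" "T\<^sub>t \<le> 1 / grid_step i"
begin

lemma bottom_radius_square_le: "T\<^sub>b\<^sup>2 \<le> real CARD('n)"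
  using radii(1,2) by (intro sqrt_ge_absD) simp

lemma extreme_levels_dim3:
  fixes k :: "'n \<Rightarrow> int" and \<theta> :: "'n \<Rightarrow> real"
  assumes "CARD('n) = 3"
  shows "real (card (near_cells (\<lambda>j. of_int (k j) / grid_step i) T\<^sub>b)) + real (card (near_cells \<theta> T\<^sub>t))
    \<le> 5 ^ CARD('n)"
proof -
  have "3/2 \<le> sqrt (3::real)" by (rule real_le_rsqrt) (simp add: power2_eq_square)
  moreover have "sqrt (3::real) < 2" by (rule real_less_lsqrt) simp_all
  then have s: "grid_step i = 1"
    using bottom_step assms by (intro grid_step_between[where r="sqrt 3"]) auto
  have "card (near_cells (\<lambda>j. of_int (k j)) T\<^sub>b) \<le> 81"
    using radii(1) bottom_radius_square_le assms by (intro card_near_cells_dim3) auto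
  moreover have "card (near_cells \<theta> T\<^sub>t) \<le> nat \<lceil>2 * 1 + 1\<rceil> ^ 3"
    using radii(3,4) s assms card_near_cells_le_box[of T\<^sub>t 1 \<theta>] by simp
  ultimately show ?thesis using s assms by simp
qed

lemma extreme_levels_dim5_6:
  fixes k :: "'n \<Rightarrow> int" and \<theta> :: "'n \<Rightarrow> real"
  assumes "CARD('n) = 5 \<or> CARD('n) = 6"
  shows "real (card (near_cells (\<lambda>j. of_int (k j) / grid_step i) T\<^sub>b)) + real (card (near_cells \<theta> T\<^sub>t))
    \<le> 2 * 5 ^ CARD('n)"
proof -
  have "5 \<le> real CARD('n)" "real CARD('n) \<le> 6" using assms by linarith+
  then have "sqrt 5 \<le> sqrt (real CARD('n))" "sqrt (real CARD('n)) \<le> sqrt 6"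
    by (simp_all only: real_sqrt_le_iff)
  moreover have "2 < sqrt (5::real)" by (rule real_less_rsqrt) simp
  moreover have "sqrt (6::real) < 5/2" by (rule real_less_lsqrt) (simp_all add: power2_eq_square)
  ultimately have sqrt_d: "2 < sqrt (real CARD('n))" "sqrt (real CARD('n)) < 5/2" by linarith+
  have s: "grid_step i = 1/2"
    by (rule grid_step_between(2)[OF bottom_step]) (use sqrt_d in linarith)+
  have centre: "(\<lambda>j. of_int (k j) / grid_step i) = (\<lambda>j. of_int (2 * k j))" unfolding s by (simp add: mult.commute)
  have "T\<^sub>b + 1/2 \<le> of_int 2 + 1" using radii(2) sqrt_d by simp
  then have "card (near_cells (\<lambda>j. of_int (2 * k j)) T\<^sub>b) \<le> nat (2 * 2 + 1) ^ CARD('n)"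
    using radii(1) by (rule card_near_cells_int_center[rotated])
  then have b: "real (card (near_cells (\<lambda>j. of_int (k j) / grid_step i) T\<^sub>b)) \<le> 5 ^ CARD('n)"
    unfolding centre by simp
  have "T\<^sub>t \<le> 2" using radii(4) unfolding s by simp
  then have "card (near_cells \<theta> T\<^sub>t) \<le> nat \<lceil>2 * 2 + 1 :: real\<rceil> ^ CARD('n)"
    using radii(3) by (rule card_near_cells_le_box[rotated])
  then have t: "real (card (near_cells \<theta> T\<^sub>t)) \<le> 5 ^ CARD('n)" by simp
  from b t show ?thesis by linarith
qed

lemma extreme_levels_dim7:
  fixes k :: "'n \<Rightarrow> int" and \<theta> :: "'n \<Rightarrow> real"
  assumes "CARD('n) = 7"
  shows "real (card (near_cells (\<lambda>j. of_int (k j) / grid_step i) T\<^sub>b)) + real (card (near_cells \<theta> T\<^sub>t))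
    \<le> (641/100) ^ CARD('n) + 5 ^ CARD('n)"
proof -
  have "5/2 \<le> sqrt (7::real)" by (rule real_le_rsqrt) (simp add: power2_eq_square)
  moreover have "sqrt (7::real) < 3" by (rule real_less_lsqrt) simp_all
  ultimately have s: "grid_step i = 1/2"
    using bottom_step assms by (intro grid_step_between(2)[where r="sqrt 7"]) auto
  have "card (near_cells \<theta> T\<^sub>t) \<le> nat \<lceil>2 * (2::real) + 1\<rceil> ^ CARD('n)"
    using radii(3,4) unfolding s by (intro card_near_cells_le_box) auto
  then have "real (card (near_cells \<theta> T\<^sub>t)) \<le> 5 ^ CARD('n)" by simp
  then show ?thesis
    using card_near_cells_exponential[OF radii(1) bottom_radius_square_le] by (intro add_mono)
qed

lemma extreme_levels_dim_ge_8:
  fixes k :: "'n \<Rightarrow> int" and \<theta> :: "'n \<Rightarrow> real"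
  shows "real (card (near_cells (\<lambda>j. of_int (k j) / grid_step i) T\<^sub>b)) + real (card (near_cells \<theta> T\<^sub>t))
    \<le> 2 * (641/100) ^ CARD('n)"
proof -
  have "1 / grid_step i < sqrt (real CARD('n))"
    using bottom_step(1) by (metis divide_less_eq grid_step_pos mult.commute)
  then have "T\<^sub>t\<^sup>2 \<le> real CARD('n)" using radii(3,4) by (intro sqrt_ge_absD) simp
  then have "real (card (near_cells \<theta> T\<^sub>t)) \<le> (641/100) ^ CARD('n)"
    by (rule card_near_cells_exponential[OF radii(3)])
  moreover have "real (card (near_cells (\<lambda>j. of_int (k j) / grid_step i) T\<^sub>b)) \<le> (641/100) ^ CARD('n)"
    by (rule card_near_cells_exponential[OF radii(1) bottom_radius_square_le])
  ultimately show ?thesis by linarith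
qed

lemma extreme_levels_card_le:
  fixes k :: "'n \<Rightarrow> int" and \<theta> :: "'n \<Rightarrow> real"
  assumes "CARD('n) \<noteq> 2"
  shows "real (card (near_cells (\<lambda>j. of_int (k j) / grid_step i) T\<^sub>b)) + real (card (near_cells \<theta> T\<^sub>t))
    \<le> of_int \<lfloor>2 * sqrt (real CARD('n)) + 2\<rfloor> ^ CARD('n)"
proof -
  let ?d = "CARD('n)"
  have "?d \<ge> 1" by (simp add: Suc_leI)
  then consider "?d = 1" | "?d = 3" | "?d = 4" | "?d = 5 \<or> ?d = 6" | "?d = 7" | "?d \<ge> 8"
    using assms by linarith
  then show ?thesis
  proof cases
    case 1
    then have "grid_step i = 1" using grid_step_between(1)[OF bottom_step] by simp
    then show ?thesis using bottom_step(1) 1 by simp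
  next
    case 2
    then show ?thesis using extreme_levels_dim3[OF 2, of k \<theta>] by (intro le_floor_box_power[of _ 5]) simp_all
  next
    case 3
    then have "sqrt (real ?d) = 2" by simp
    then have "grid_step i = 1/2" using grid_step_between(2)[OF bottom_step] by simp
    then show ?thesis using bottom_step(1) 3 by simp
  next
    case 4
    moreover have "2 * 5 ^ ?d \<le> (6::real) ^ ?d" using 4 by auto
    ultimately show ?thesis
      using extreme_levels_dim5_6[of k \<theta>] by (intro le_floor_box_power[of _ 6]) auto
  next
    case 5
    moreover have "(641/100) ^ 7 + 5 ^ 7 \<le> (7::real) ^ 7" by (simp add: power_divide)
    ultimately show ?thesis
      using extreme_levels_dim7[of k \<theta>] by (intro le_floor_box_power[of _ 7]) auto
  next
    case 6
    then show ?thesis using extreme_levels_dim_ge_8[of k \<theta>] two_mult_power_le_7_power[of ?d]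
      by (intro le_floor_box_power[of _ 7]) auto
  qed
qed

end

section \<open>Points charged to one point of the hitting set\<close>

lemma int_lattice_coordinates:
  assumes "h \<in> int_lattice"
  obtains k where "\<And>j. h$j = of_int (k j)"
proof -
  have "\<forall>j. \<exists>n. h$j = of_int n" using assms unfolding int_lattice_def by (auto elim!: Ints_cases)
  then show ?thesis using that by metis
qed

lemma sum_atLeastAtMost_int_le:
  fixes f :: "int \<Rightarrow> real"
  assumes "\<And>i. i \<in> {a..b} \<Longrightarrow> f i \<le> B" "a \<le> b + 1"
  shows "(\<Sum>i\<in>{a..b}. f i) \<le> of_int (b - a + 1) * B"
proof -
  have "(\<Sum>i\<in>{a..b}. f i) \<le> (\<Sum>i\<in>{a..b}. B)" by (rule sum_mono) (use assms in auto)
  also have "\<dots> = of_int (b - a + 1) * B" using assms(2) by simp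
  finally show ?thesis .
qed

lemma sum_atLeastAtMost_int_ends:
  fixes f :: "int \<Rightarrow> real"
  assumes "a < b"
  shows "(\<Sum>i\<in>{a..b}. f i) = f a + f b + (\<Sum>i\<in>{a+1..b-1}. f i)"
proof -
  have "{a..b} = insert a (insert b {a+1..b-1})" using assms by auto
  then show ?thesis using assms by simp
qed

lemma sum_levels_le:
  fixes c :: "int \<Rightarrow> real"
  assumes "\<And>i. c i \<le> K" "0 \<le> K" "0 \<le> L" "i\<^sub>0 \<le> i\<^sub>1" "i\<^sub>1 \<le> i\<^sub>0 + L + 1"
    and "i\<^sub>1 = i\<^sub>0 + L + 1 \<Longrightarrow> c i\<^sub>0 + c i\<^sub>1 \<le> K"
  shows "(\<Sum>i\<in>{i\<^sub>0..i\<^sub>1}. c i) \<le> K * (of_int L + 1)"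
proof (cases "i\<^sub>1 = i\<^sub>0 + L + 1")
  case True
  have "(\<Sum>i\<in>{i\<^sub>0..i\<^sub>1}. c i) = c i\<^sub>0 + c i\<^sub>1 + (\<Sum>i\<in>{i\<^sub>0+1..i\<^sub>1-1}. c i)"
    using True assms(3) by (intro sum_atLeastAtMost_int_ends) linarith
  also have "(\<Sum>i\<in>{i\<^sub>0+1..i\<^sub>1-1}. c i) \<le> of_int L * K"
    using sum_atLeastAtMost_int_le[of "i\<^sub>0+1" "i\<^sub>1-1" c K] assms(1,3) True by simp
  finally show ?thesis using assms(6)[OF True] by (simp add: algebra_simps)
next
  case False
  then have "(\<Sum>i\<in>{i\<^sub>0..i\<^sub>1}. c i) \<le> of_int (i\<^sub>1 - i\<^sub>0 + 1) * K"
    using assms(1,4) by (intro sum_atLeastAtMost_int_le) auto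
  also have "\<dots> \<le> (of_int L + 1) * K"
    using False assms(2,5) by (intro mult_right_mono) auto
  finally show ?thesis by (simp add: mult.commute)
qed

lemma card_subset_anc_candidates_le_sum:
  fixes h :: "real^'n"
  assumes "M > 1" "F \<subseteq> anc_candidates M h"
  defines "d \<equiv> CARD('n)"
  shows "real (card F) \<le> (\<Sum>i\<in>{\<lfloor>log 2 (1 / sqrt d)\<rfloor>..\<lfloor>log 2 (M / sqrt d)\<rfloor>}.
                              real (card (near_cells (\<lambda>j. h$j / grid_step i) (level_radius d M i))))"
proof -
  let ?I = "{\<lfloor>log 2 (1 / sqrt d)\<rfloor>..\<lfloor>log 2 (M / sqrt d)\<rfloor>}"
  let ?G = "\<lambda>i. grid_points_near h i (level_radius d M i)"
  have T_pos: "level_radius d M i > 0" for i unfolding d_def by (simp add: level_radius_pos)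
  have F_sub: "F \<subseteq> (\<Union>i\<in>?I. ?G i)"
    using assms(2) anc_candidates_subset_levels[OF assms(1), of h] unfolding d_def by blast
  have "card F \<le> card (\<Union>i\<in>?I. ?G i)"
    by (rule card_mono[OF _ F_sub]) (simp add: finite_grid_points_near T_pos)
  also have "\<dots> \<le> (\<Sum>i\<in>?I. card (?G i))" by (rule card_UN_le) simp
  also have "\<dots> \<le> (\<Sum>i\<in>?I. card (near_cells (\<lambda>j. h$j / grid_step i) (level_radius d M i)))"
    by (intro sum_mono card_grid_points_near_le T_pos)
  finally show ?thesis by (simp flip: of_nat_sum)
qed

definition lattice_neighbour :: "real^'n \<Rightarrow> real^'n \<Rightarrow> bool" where
  "lattice_neighbour q h \<longleftrightarrow> q \<noteq> h \<and> (\<forall>j. q$j - h$j \<in> {-1, 0, 1})"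

lemma inj_on_offsets: "inj_on (\<lambda>p::real^'n. \<lambda>j. p$j - h$j) A"
  by (auto simp: inj_on_def vec_eq_iff fun_eq_iff)

lemma offsets_image_subset_PiE:
  "(\<lambda>p::real^'n. \<lambda>j. p$j - h$j) ` {p. \<forall>j. p$j - h$j \<in> S} \<subseteq> PiE UNIV (\<lambda>_. S)"
  by (auto simp: PiE_iff)

lemma finite_offsets:
  fixes h :: "real^'n"
  assumes "finite S"
  shows "finite {p. \<forall>j. p$j - h$j \<in> S}"
proof -
  have "finite ((\<lambda>p. \<lambda>j. p$j - h$j) ` {p. \<forall>j. p$j - h$j \<in> S})"
    by (rule finite_subset[OF offsets_image_subset_PiE]) (simp add: finite_PiE assms)
  then show ?thesis by (rule finite_imageD) (rule inj_on_offsets)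
qed

lemma card_offsets_le:
  fixes h :: "real^'n"
  assumes "finite S"
  shows "card {p. \<forall>j. p$j - h$j \<in> S} \<le> card S ^ CARD('n)"
proof -
  have "card {p. \<forall>j. p$j - h$j \<in> S} \<le> card (PiE UNIV (\<lambda>_::'n. S))"
    using assms by (intro card_inj_on_le[OF inj_on_offsets offsets_image_subset_PiE]) (simp add: finite_PiE)
  then show ?thesis by (simp add: card_PiE)
qed

lemma grid_points_near_subset_offsets:
  fixes h :: "real^'n" and k :: "'n \<Rightarrow> int"
  assumes "\<And>j. h$j = grid_step i * of_int (k j)" "0 < T" "T \<le> 3/2"
  shows "grid_points_near h i T \<subseteq> {p. \<forall>j. p$j - h$j \<in> {- grid_step i, 0, grid_step i}}"
proof
  fix p assume "p \<in> grid_points_near h i T"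
  then obtain m where m: "m \<in> near_cells (\<lambda>j. of_int (k j)) T" and p: "p = (\<chi> j. grid_step i * of_int (m j))"
    using assms(1) unfolding grid_points_near_def by auto
  have "m j \<in> {k j - 1..k j + 1}" for j
    using near_cells_subset_PiE[OF assms(2)] int_window_of_int_subset[of "T + 1/2" 1 "k j"] m assms(3)
    by (force simp: PiE_iff)
  then have offset: "m j - k j \<in> {-1, 0, 1}" for j
    using atLeastAtMost_iff insertCI singletonI by (smt (verit))
  have scaled: "grid_step i * of_int e \<in> {- grid_step i, 0, grid_step i}" if "e \<in> {-1, 0, 1}" for e
    using that by auto
  have diff: "p$j - h$j = grid_step i * of_int (m j - k j)" for j
    unfolding p using assms(1) by (simp add: algebra_simps)
  have "p$j - h$j \<in> {- grid_step i, 0, grid_step i}" for j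
    unfolding diff by (rule scaled[OF offset])
  then show "p \<in> {p. \<forall>j. p$j - h$j \<in> {- grid_step i, 0, grid_step i}}" by blast
qed

text \<open>The one configuration in the plane where counting cells is not enough: both levels
  \<open>-1\<close> and \<open>0\<close> can contribute the nine points of a \<open>3 \<times> 3\<close> grid around \<open>h\<close>, seventeen
  points in all. One of them is missing from \<open>F\<close>: \<open>h\<close> itself, or else a lattice neighbour
  of \<open>h\<close>.\<close>

lemma card_le_16_two_grids:
  fixes h :: "real^'n"
  assumes "CARD('n) = 2"
    and "F \<subseteq> {p. \<forall>j. p$j - h$j \<in> {-1, 0, 1}} \<union> {p. \<forall>j. p$j - h$j \<in> {-2, 0, 2}}"
    and "h \<in> F \<Longrightarrow> \<exists>q. lattice_neighbour q h \<and> q \<notin> F"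
  shows "card F \<le> 16"
proof -
  let ?B = "{p. \<forall>j. p$j - h$j \<in> {-1, 0, 1::real}}" and ?T = "{p. \<forall>j. p$j - h$j \<in> {-2, 0, 2::real}}"
  have fin: "finite ?B" "finite ?T" by (rule finite_offsets; simp)+
  have "card ?B \<le> 9" "card ?T \<le> 9"
    using card_offsets_le[of "{-1, 0, 1::real}" h] card_offsets_le[of "{-2, 0, 2::real}" h] assms(1)
    by (simp_all add: power2_eq_square)
  moreover have "card ?B + card ?T = card (?B \<union> ?T) + card (?B \<inter> ?T)"
    using fin by (rule card_Un_Int)
  moreover have "1 \<le> card (?B \<inter> ?T)"
  proof -
    have "{h} \<subseteq> ?B \<inter> ?T" by simp
    then have "card {h} \<le> card (?B \<inter> ?T)" by (rule card_mono[OF finite_Int[OF disjI1[OF fin(1)]]])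
    then show ?thesis by simp
  qed
  ultimately have "card (?B \<union> ?T) \<le> 17" by linarith
  obtain x where x: "x \<in> ?B \<union> ?T" "x \<notin> F"
  proof (cases "h \<in> F")
    case True
    then show ?thesis using assms(3) that unfolding lattice_neighbour_def by blast
  next
    case False
    then show ?thesis using that[of h] by simp
  qed
  then have "F \<subseteq> (?B \<union> ?T) - {x}" using assms(2) by blast
  then have "card F \<le> card ((?B \<union> ?T) - {x})" using fin by (intro card_mono) auto
  also have "\<dots> = card (?B \<union> ?T) - 1" using fin x(1) by simp
  finally show ?thesis using \<open>card (?B \<union> ?T) \<le> 17\<close> by linarith
qed

lemma dim2_level_counts:
  fixes h :: "real^'n" and k :: "'n \<Rightarrow> int" and M :: real
  assumes "CARD('n) = 2" "\<And>j. h$j = of_int (k j)"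
  defines "c \<equiv> \<lambda>i. real (card (near_cells (\<lambda>j. h$j / grid_step i) (level_radius 2 M i)))"
  shows "c (-1) \<le> 9" "c 0 \<le> 12" "c i \<le> 15" "level_radius 2 M i \<le> 1 \<Longrightarrow> c i \<le> 9"
proof -
  have T_pos: "0 < level_radius 2 M i" for i by (simp add: level_radius_pos)
  have "sqrt (2::real) < 3/2" by (rule real_less_lsqrt) (simp_all add: power2_eq_square)
  then have T_le: "level_radius 2 M i \<le> 3/2" for i using level_radius_le_sqrt[of 2 M i] by simp
  have T_sq: "(level_radius 2 M i)\<^sup>2 \<le> 2" for i
    using level_radius_le_sqrt[of 2 M i] T_pos[of i] by (intro sqrt_ge_absD) simp
  have "card (near_cells (\<lambda>j. of_int (k j)) (level_radius 2 M (-1))) \<le> nat (2 * 1 + 1) ^ 2"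
    using card_near_cells_int_center[OF T_pos, where k=k and r=1] T_le[of "-1"] assms(1) by simp
  then show "c (-1) \<le> 9" unfolding c_def assms(2) by (simp add: grid_step_def)
  have "card (near_cells (\<lambda>j. of_int (k j) / 2) (level_radius 2 M 0)) \<le> 12"
    using assms(1) T_pos T_sq by (intro card_near_cells_dim2_half_int_le_12)
  then show "c 0 \<le> 12" unfolding c_def assms(2) by (simp add: grid_step_def)
  show "c i \<le> 15" unfolding c_def using card_near_cells_dim2_le_15[OF assms(1) T_pos T_sq] by simp
  show "c i \<le> 9" if "level_radius 2 M i \<le> 1"
    using card_near_cells_le_box[OF T_pos that, of "\<lambda>j. h$j / grid_step i"] assms(1)
    unfolding c_def by simp
qed

lemma sum_dim2_levels_le:
  fixes c :: "int \<Rightarrow> real"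
  assumes "1 \<le> L" "c (-1) \<le> 9" "c L \<le> 9" "c 0 \<le> 12" "\<And>i. c i \<le> 15"
  shows "(\<Sum>i\<in>{-1..L}. c i) \<le> 16 * (of_int L + 1)"
proof -
  have "(\<Sum>i\<in>{-1..L}. c i) = c (-1) + c L + (\<Sum>i\<in>{0..L-1}. c i)"
    using assms(1) sum_atLeastAtMost_int_ends[of "-1" L c] by simp
  also have "(\<Sum>i\<in>{0..L-1}. c i) = c 0 + (\<Sum>i\<in>{1..L-1}. c i)"
  proof -
    have "{0..L-1} = insert 0 {1..L-1}" using assms(1) by auto
    then show ?thesis by simp
  qed
  also have "(\<Sum>i\<in>{1..L-1}. c i) \<le> of_int (L - 1) * 15"
    using sum_atLeastAtMost_int_le[of 1 "L - 1" c 15] assms(1,5) by simp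
  finally show ?thesis using assms(1-4) by simp
qed

lemma dim2_two_levels_subset_offsets:
  fixes h :: "real^'n" and k :: "'n \<Rightarrow> int" and M :: real
  assumes k: "\<And>j. h$j = of_int (k j)" and even: "\<And>j. even (k j)" and top: "level_radius 2 M 0 \<le> 1"
  shows "grid_points_near h (-1) (level_radius 2 M (-1)) \<union> grid_points_near h 0 (level_radius 2 M 0)
    \<subseteq> {p. \<forall>j. p$j - h$j \<in> {-1, 0, 1}} \<union> {p. \<forall>j. p$j - h$j \<in> {-2, 0, 2}}"
proof -
  have T_pos: "0 < level_radius 2 M i" for i by (simp add: level_radius_pos)
  have T_le: "level_radius 2 M (-1) \<le> 3/2"
    using level_radius_le_sqrt[of 2 M "-1"] real_less_lsqrt[of "3/2" 2] by (simp add: power2_eq_square)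
  have "grid_points_near h (-1) (level_radius 2 M (-1)) \<subseteq> {p. \<forall>j. p$j - h$j \<in> {-1, 0, 1}}"
    using grid_points_near_subset_offsets[where h=h and k=k and i="-1", OF _ T_pos T_le] k
    by (simp add: grid_step_def)
  moreover have "grid_points_near h 0 (level_radius 2 M 0) \<subseteq> {p. \<forall>j. p$j - h$j \<in> {-2, 0, 2}}"
  proof -
    have "k j = 2 * (k j div 2)" for j using even by simp
    then have "h$j = grid_step 0 * of_int (k j div 2)" for j
      using k[of j] by (simp add: grid_step_def) (metis of_int_mult of_int_numeral)
    then have "grid_points_near h 0 (level_radius 2 M 0) \<subseteq> {p. \<forall>j. p$j - h$j \<in> {- grid_step 0, 0, grid_step 0}}"
      by (rule grid_points_near_subset_offsets[OF _ T_pos[of 0]]) (use top in simp)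
    then show ?thesis by (simp add: grid_step_def)
  qed
  ultimately show ?thesis by blast
qed

lemma card_charged_dim2_two_levels:
  fixes h :: "real^'n" and k :: "'n \<Rightarrow> int" and M :: real
  assumes d2: "CARD('n) = 2" and k: "\<And>j. h$j = of_int (k j)"
    and F: "F \<subseteq> grid_points_near h (-1) (level_radius 2 M (-1)) \<union> grid_points_near h 0 (level_radius 2 M 0)"
    and top: "level_radius 2 M 0 \<le> 1"
    and nb: "h \<in> F \<Longrightarrow> \<exists>q. lattice_neighbour q h \<and> q \<notin> F"
  shows "card F \<le> 16"
proof (cases "\<exists>j. odd (k j)")
  case True
  then obtain j\<^sub>0 where "odd (k j\<^sub>0)" by blast
  then have half: "h$j\<^sub>0 / grid_step 0 = of_int (k j\<^sub>0 div 2) + 1/2"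
    using k by (auto simp: grid_step_def elim!: oddE)
  have T_pos: "0 < level_radius 2 M i" for i by (simp add: level_radius_pos)
  have "card F \<le> card (grid_points_near h (-1) (level_radius 2 M (-1)))
                  + card (grid_points_near h 0 (level_radius 2 M 0))"
    using F by (intro order_trans[OF card_mono card_Un_le]) (simp_all add: finite_grid_points_near T_pos)
  also have "\<dots> \<le> 9 + 2 * 3 ^ (CARD('n) - 1)"
  proof (rule add_mono)
    have "card (near_cells (\<lambda>j. h$j / grid_step (-1)) (level_radius 2 M (-1))) \<le> 9"
      using dim2_level_counts(1)[OF d2 k, where M=M] by simp
    then show "card (grid_points_near h (-1) (level_radius 2 M (-1))) \<le> 9"
      using card_grid_points_near_le[OF T_pos[of "-1"], of h "-1"] by linarith
    show "card (grid_points_near h 0 (level_radius 2 M 0)) \<le> 2 * 3 ^ (CARD('n) - 1)"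
      using card_grid_points_near_le[OF T_pos[of 0], of h 0]
        card_near_cells_half_int_coordinate[where \<theta>="\<lambda>j. h$j / grid_step 0", OF T_pos[of 0] top half]
      by linarith
  qed
  finally show ?thesis using d2 by simp
next
  case False
  then show ?thesis
    using card_le_16_two_grids[OF d2 _ nb] dim2_two_levels_subset_offsets[OF k _ top] F by blast
qed

lemma card_charged_dim2_extreme:
  fixes h :: "real^'n" and M :: real
  assumes d2: "CARD('n) = 2" and M: "M > 1" and h: "h \<in> int_lattice" and F: "F \<subseteq> anc_candidates M h"
    and nb: "h \<in> F \<Longrightarrow> \<exists>q. lattice_neighbour q h \<and> q \<notin> F"
    and long: "\<lfloor>log 2 (M / sqrt 2)\<rfloor> = \<lfloor>log 2 (1 / sqrt 2)\<rfloor> + \<lfloor>log 2 M\<rfloor> + 1"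
  shows "real (card F) \<le> 16 * (of_int \<lfloor>log 2 M\<rfloor> + 1)"
proof -
  let ?L = "\<lfloor>log 2 M\<rfloor>"
  obtain k where k: "\<And>j. h$j = of_int (k j)" using int_lattice_coordinates[OF h] by blast
  define c where "c i = real (card (near_cells (\<lambda>j. h$j / grid_step i) (level_radius 2 M i)))" for i
  have ext: "1 < sqrt 2 * grid_step \<lfloor>log 2 (1 / sqrt 2)\<rfloor>" "sqrt 2 * grid_step \<lfloor>log 2 (1 / sqrt 2)\<rfloor> < 2"
    "level_radius 2 M \<lfloor>log 2 (M / sqrt 2)\<rfloor> \<le> 1 / grid_step \<lfloor>log 2 (1 / sqrt 2)\<rfloor>"
    using extreme_levels[OF M, of 2] long by simp_all
  have "grid_step \<lfloor>log 2 (1 / sqrt 2)\<rfloor> = 1"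
    using grid_step_between(1)[OF ext(1,2)] real_less_lsqrt[of 2 2] by simp
  then have i\<^sub>0: "\<lfloor>log 2 (1 / sqrt 2)\<rfloor> = -1" by (simp add: grid_step_eq_one_iff)
  then have i\<^sub>1: "\<lfloor>log 2 (M / sqrt 2)\<rfloor> = ?L" using long by simp
  have top: "level_radius 2 M ?L \<le> 1" using ext(3) i\<^sub>0 i\<^sub>1 by (simp add: grid_step_def)
  have "real (card F) \<le> (\<Sum>i\<in>{-1..?L}. c i)"
    using card_subset_anc_candidates_le_sum[OF M F] d2 i\<^sub>0 i\<^sub>1 unfolding c_def by simp
  moreover have "(\<Sum>i\<in>{-1..?L}. c i) \<le> 16 * (of_int ?L + 1)" if "?L \<noteq> 0"
  proof (rule sum_dim2_levels_le)
    have "0 \<le> ?L" using M by simp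
    then show "1 \<le> ?L" using that by linarith
  qed (use top dim2_level_counts[OF d2 k, where M=M, folded c_def] in auto)
  moreover have "card F \<le> 16" if "?L = 0"
  proof -
    have "{\<lfloor>log 2 (1 / sqrt 2)\<rfloor>..\<lfloor>log 2 (M / sqrt 2)\<rfloor>} = {-1, 0}" using i\<^sub>0 i\<^sub>1 that by auto
    then have "F \<subseteq> grid_points_near h (-1) (level_radius 2 M (-1)) \<union> grid_points_near h 0 (level_radius 2 M 0)"
      using F anc_candidates_subset_levels[OF M, of h] d2 by auto
    then show ?thesis using card_charged_dim2_two_levels[OF d2 k _ _ nb] top that by simp
  qed
  ultimately show ?thesis by (cases "?L = 0") auto
qed

lemma floor_two_sqrt_two_plus_two: "\<lfloor>2 * sqrt 2 + 2 :: real\<rfloor> = 4"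
proof -
  have "sqrt (2::real) < 3/2" by (rule real_less_lsqrt) (simp_all add: power2_eq_square)
  moreover have "1 \<le> sqrt (2::real)" by simp
  ultimately show ?thesis by (simp add: floor_eq_iff)
qed

lemma card_charged_le:
  fixes h :: "real^'n" and M :: real
  assumes M: "M > 1" and h: "h \<in> int_lattice" and F: "F \<subseteq> anc_candidates M h"
    and nb: "CARD('n) = 2 \<Longrightarrow> h \<in> F \<Longrightarrow> \<exists>q. lattice_neighbour q h \<and> q \<notin> F"
  shows "real (card F) \<le> of_int \<lfloor>2 * sqrt (real CARD('n)) + 2\<rfloor> ^ CARD('n) * (of_int \<lfloor>log 2 M\<rfloor> + 1)"
proof -
  define d where "d = CARD('n)"
  define K :: real where "K = of_int \<lfloor>2 * sqrt (real d) + 2\<rfloor> ^ d"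
  define i\<^sub>0 where "i\<^sub>0 = \<lfloor>log 2 (1 / sqrt d)\<rfloor>"
  define i\<^sub>1 where "i\<^sub>1 = \<lfloor>log 2 (M / sqrt d)\<rfloor>"
  define c where "c i = real (card (near_cells (\<lambda>j. h$j / grid_step i) (level_radius d M i)))" for i
  have T_pos: "0 < level_radius d M i" for i unfolding d_def by (simp add: level_radius_pos)
  have c_le: "c i \<le> K" for i
    unfolding c_def K_def d_def by (intro card_near_cells_level_le T_pos[unfolded d_def] level_radius_le_sqrt)
  have range: "i\<^sub>0 \<le> i\<^sub>1" "i\<^sub>1 \<le> i\<^sub>0 + \<lfloor>log 2 M\<rfloor> + 1"
    using level_index_range[OF M, of d] unfolding i\<^sub>0_def i\<^sub>1_def d_def by simp_all
  have "real (card F) \<le> (\<Sum>i\<in>{i\<^sub>0..i\<^sub>1}. c i)"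
    using card_subset_anc_candidates_le_sum[OF M F] unfolding c_def i\<^sub>0_def i\<^sub>1_def d_def .
  show ?thesis
  proof (cases "d = 2 \<and> i\<^sub>1 = i\<^sub>0 + \<lfloor>log 2 M\<rfloor> + 1")
    case True
    then have d2: "CARD('n) = 2" unfolding d_def by simp
    have "\<lfloor>log 2 (M / sqrt 2)\<rfloor> = \<lfloor>log 2 (1 / sqrt 2)\<rfloor> + \<lfloor>log 2 M\<rfloor> + 1"
      using True unfolding i\<^sub>0_def i\<^sub>1_def by auto
    then show ?thesis
      using card_charged_dim2_extreme[OF d2 M h F nb[OF d2]] floor_two_sqrt_two_plus_two d2 by simp
  next
    case False
    have "c i\<^sub>0 + c i\<^sub>1 \<le> K" if long: "i\<^sub>1 = i\<^sub>0 + \<lfloor>log 2 M\<rfloor> + 1"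
    proof -
      obtain k where k: "\<And>j. h$j = of_int (k j)" using int_lattice_coordinates[OF h] by blast
      note ext = extreme_levels[OF M, of d, folded i\<^sub>0_def i\<^sub>1_def, OF _ long]
      show ?thesis
        using extreme_levels_card_le[OF ext(1,2)[unfolded d_def] T_pos[unfolded d_def]
            level_radius_le_sqrt T_pos[unfolded d_def] ext(3)[unfolded d_def], of k]
          False long k unfolding c_def K_def d_def by simp
    qed
    then have "(\<Sum>i\<in>{i\<^sub>0..i\<^sub>1}. c i) \<le> K * (of_int \<lfloor>log 2 M\<rfloor> + 1)"
      using c_le range M by (intro sum_levels_le) (simp_all add: K_def)
    with \<open>real (card F) \<le> _\<close> show ?thesis unfolding K_def d_def by simp
  qed
qed

section \<open>The charging invariant of ANC\<close>

lemma cball_contains_lattice_neighbour: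
  fixes c h :: "real^'n"
  assumes "CARD('n) \<le> 2" "dist c h \<le> \<rho>" "1 \<le> \<rho>"
  shows "\<exists>q. lattice_neighbour q h \<and> dist c q \<le> \<rho>"
proof -
  define x where "x = c - h"
  obtain a where a: "\<And>j. \<bar>x$j\<bar> \<le> \<bar>x$a\<bar>"
    using Max_in[of "range (\<lambda>j. \<bar>x$j\<bar>)"] Max_ge[of "range (\<lambda>j. \<bar>x$j\<bar>)"] by fastforce
  define e :: real where "e = (if 0 \<le> x$a then 1 else -1)"
  define q where "q = h + (\<chi> j. if j = a then e else 0)"
  have "(dist c q)\<^sup>2 = (\<Sum>j\<in>UNIV. (x$j - (if j = a then e else 0))\<^sup>2)"
    by (simp add: dist_norm norm_vec_power2 q_def x_def algebra_simps)
  also have "\<dots> = (\<Sum>j\<in>UNIV. (x$j)\<^sup>2 + (if j = a then 1 - 2 * \<bar>x$a\<bar> else 0))"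
    by (intro sum.cong) (auto simp: e_def power2_diff abs_if)
  also have "\<dots> = (\<Sum>j\<in>UNIV. (x$j)\<^sup>2) + 1 - 2 * \<bar>x$a\<bar>"
    by (simp add: sum.distrib)
  also have "\<dots> \<le> \<rho>\<^sup>2"
  proof (cases "\<bar>x$a\<bar> \<ge> 1/2")
    case True
    have "(\<Sum>j\<in>UNIV. (x$j)\<^sup>2) = (dist c h)\<^sup>2" by (simp add: dist_norm norm_vec_power2 x_def)
    also have "\<dots> \<le> \<rho>\<^sup>2" using assms(2) by (simp add: power_mono)
    finally show ?thesis using True by linarith
  next
    case False
    have "(\<Sum>j\<in>UNIV. (x$j)\<^sup>2) \<le> (\<Sum>j\<in>(UNIV::'n set). (x$a)\<^sup>2)"
      using a by (intro sum_mono) (simp add: abs_le_square_iff)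
    also have "\<dots> \<le> 2 * \<bar>x$a\<bar>\<^sup>2" using assms(1) by (simp add: mult_right_mono)
    finally have "(\<Sum>j\<in>UNIV. (x$j)\<^sup>2) + 1 - 2 * \<bar>x$a\<bar> \<le> 1 - 2 * \<bar>x$a\<bar> * (1 - \<bar>x$a\<bar>)"
      by (simp add: power2_eq_square algebra_simps)
    also have "\<dots> \<le> 1" using False by simp
    also have "\<dots> \<le> \<rho>\<^sup>2" using assms(3) by (simp add: one_le_power)
    finally show ?thesis .
  qed
  finally have "(dist c q)\<^sup>2 \<le> \<rho>\<^sup>2" .
  then have "dist c q \<le> \<rho>" using power2_le_imp_le assms(3) by simp
  moreover have "lattice_neighbour q h"
    unfolding lattice_neighbour_def q_def by (auto simp: vec_eq_iff e_def)
  ultimately show ?thesis by blast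
qed

text \<open>\<open>g\<close> charges every point added by ANC to a point of \<open>H\<close> lying in the ball that caused
  the addition. In the plane we also record that a point charged to itself has a lattice
  neighbour that is not charged to it: this is the extra information \<open>card_charged_le\<close>
  needs when \<open>CARD('n) = 2\<close>.\<close>

definition anc_charging :: "real \<Rightarrow> (real^'n) set \<Rightarrow> (real^'n) set \<Rightarrow> (real^'n \<Rightarrow> real^'n) \<Rightarrow> bool" where
  "anc_charging M H S g \<longleftrightarrow>
     (\<forall>p\<in>S. g p \<in> H \<and> p \<in> anc_candidates M (g p)) \<and>
     (CARD('n) = 2 \<longrightarrow> (\<forall>h\<in>S. g h = h \<longrightarrow> (\<exists>q. lattice_neighbour q h \<and> (q \<notin> S \<or> g q \<noteq> h))))"

lemma anc_charging_insert:
  fixes S :: "(real^'n) set"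
  assumes g: "anc_charging M H S g" and "p \<notin> S" "h\<^sub>0 \<in> H" "h\<^sub>0 \<notin> S" "p \<in> anc_candidates M h\<^sub>0"
    and nb: "CARD('n) = 2 \<Longrightarrow> p = h\<^sub>0 \<Longrightarrow> \<exists>q. lattice_neighbour q p \<and> q \<notin> insert p S"
  shows "anc_charging M H (insert p S) (g(p := h\<^sub>0))"
proof -
  let ?g = "g(p := h\<^sub>0)"
  have "\<exists>q. lattice_neighbour q h \<and> (q \<notin> insert p S \<or> ?g q \<noteq> h)"
    if d2: "CARD('n) = 2" and h: "h \<in> insert p S" "?g h = h" for h
  proof (cases "h = p")
    case True
    then show ?thesis using nb[OF d2] h(2) by auto
  next
    case False
    then have "h \<in> S" "g h = h" using h by auto
    then obtain q where q: "lattice_neighbour q h" "q \<notin> S \<or> g q \<noteq> h"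
      using g d2 unfolding anc_charging_def by blast
    then show ?thesis using \<open>h\<^sub>0 \<notin> S\<close> \<open>h \<in> S\<close> by (cases "q = p") auto
  qed
  then show ?thesis using assms(1-5) unfolding anc_charging_def by auto
qed

lemma anc_charging_step:
  fixes c :: "real^'n"
  assumes g: "anc_charging M H S g" and \<rho>: "1 \<le> \<rho>" "\<rho> \<le> M" and hit: "H \<inter> cball c \<rho> \<noteq> {}"
  shows "\<exists>g'. anc_charging M H (anc_step S (cball c \<rho>, c)) g'"
proof (cases "S \<inter> cball c \<rho> = {}")
  case False
  then show ?thesis using g unfolding anc_step_def by auto
next
  case disjoint: True
  define p where "p = anc_point c (\<rho> / sqrt (real CARD('n)))"
  have step: "anc_step S (cball c \<rho>, c) = insert p S"
    unfolding anc_step_def p_def using disjoint \<rho> by (simp add: width_cball)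
  obtain h\<^sub>0 where h\<^sub>0: "h\<^sub>0 \<in> H" "dist c h\<^sub>0 \<le> \<rho>" using hit by auto
  have p: "p \<in> anc_candidates M h\<^sub>0" unfolding anc_candidates_def p_def using \<rho> h\<^sub>0(2) by blast
  have "h\<^sub>0 \<notin> S" using disjoint h\<^sub>0(2) by auto
  have nb: "\<exists>q. lattice_neighbour q p \<and> q \<notin> insert p S" if "CARD('n) = 2" "p = h\<^sub>0"
  proof -
    have "CARD('n) \<le> 2" "dist c p \<le> \<rho>" using that h\<^sub>0(2) by simp_all
    then obtain q where q: "lattice_neighbour q p" "dist c q \<le> \<rho>"
      using cball_contains_lattice_neighbour \<rho>(1) by blast
    then have "q \<notin> insert p S" using disjoint unfolding lattice_neighbour_def by auto
    then show ?thesis using q(1) by blast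
  qed
  show ?thesis
  proof (cases "p \<in> S")
    case True
    then show ?thesis using g step by (auto simp: insert_absorb)
  next
    case False
    then show ?thesis unfolding step using anc_charging_insert[OF g False h\<^sub>0(1) \<open>h\<^sub>0 \<notin> S\<close> p nb] by blast
  qed
qed

lemma finite_foldl_anc_step: "finite S \<Longrightarrow> finite (foldl anc_step S objs)"
  by (induction objs arbitrary: S) (simp_all add: anc_step_def Let_def)

lemma anc_charging_run:
  assumes "\<forall>(c, \<rho>) \<in> set balls. 1 \<le> \<rho> \<and> \<rho> \<le> M"
    and "\<forall>(c, \<rho>) \<in> set balls. H \<inter> cball c \<rho> \<noteq> {}"
  shows "\<exists>g. anc_charging M H (anc_run (map (\<lambda>(c, \<rho>). (cball c \<rho>, c::real^'n)) balls)) g"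
  using assms
proof (induction balls rule: rev_induct)
  case Nil
  have "anc_charging M H {} g" for g :: "real^'n \<Rightarrow> real^'n" unfolding anc_charging_def by simp
  then show ?case unfolding anc_run_def by simp
next
  case (snoc b bs)
  obtain c \<rho> where b: "b = (c, \<rho>)" by fastforce
  then obtain g where "anc_charging M H (anc_run (map (\<lambda>(c, \<rho>). (cball c \<rho>, c)) bs)) g"
    using snoc by auto
  moreover have "1 \<le> \<rho>" "\<rho> \<le> M" "H \<inter> cball c \<rho> \<noteq> {}" using snoc.prems b by auto
  ultimately show ?case unfolding anc_run_def using anc_charging_step b by simp
qed

lemma card_le_sum_fibres:
  assumes "finite S" "finite H" "\<forall>p\<in>S. g p \<in> H"
    and "\<And>h. h \<in> H \<Longrightarrow> real (card {p \<in> S. g p = h}) \<le> B"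
  shows "real (card S) \<le> B * real (card H)"
proof -
  have "S \<subseteq> (\<Union>h\<in>H. {p \<in> S. g p = h})" using assms(3) by auto
  then have "card S \<le> card (\<Union>h\<in>H. {p \<in> S. g p = h})" by (rule card_mono[rotated]) (simp add: assms(1,2))
  also have "\<dots> \<le> (\<Sum>h\<in>H. card {p \<in> S. g p = h})" by (rule card_UN_le[OF assms(2)])
  finally have "real (card S) \<le> (\<Sum>h\<in>H. real (card {p \<in> S. g p = h}))" by (simp flip: of_nat_sum)
  also have "\<dots> \<le> (\<Sum>h\<in>H. B)" by (rule sum_mono) (rule assms(4))
  finally show ?thesis by (simp add: mult.commute)
qed

theorem corollary1:
  fixes M :: real
    and balls :: "((real^'n) \<times> real) list"
    and H :: "(real^'n) set"
  assumes "M > 1"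
    and "\<forall>(c, \<rho>) \<in> set balls. 1 \<le> \<rho> \<and> \<rho> \<le> M"
    and "finite H" and "H \<subseteq> int_lattice"
    and "\<forall>(c, \<rho>) \<in> set balls. H \<inter> cball c \<rho> \<noteq> {}"
  shows "real (card (anc_run (map (\<lambda>(c, \<rho>). (cball c \<rho>, c)) balls)))
           \<le> of_int (\<lfloor>2 * sqrt (real CARD('n)) + 2\<rfloor> ^ CARD('n))
             * of_int (\<lfloor>log 2 M\<rfloor> + 1) * real (card H)"
proof -
  let ?S = "anc_run (map (\<lambda>(c, \<rho>). (cball c \<rho>, c)) balls)"
  obtain g where g: "anc_charging M H ?S g" using anc_charging_run[OF assms(2,5)] by blast
  have fibre: "real (card {p \<in> ?S. g p = h})
      \<le> of_int \<lfloor>2 * sqrt (real CARD('n)) + 2\<rfloor> ^ CARD('n) * (of_int \<lfloor>log 2 M\<rfloor> + 1)"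
    if "h \<in> H" for h
  proof (rule card_charged_le[OF assms(1)])
    show "h \<in> int_lattice" using that assms(4) by blast
    show "{p \<in> ?S. g p = h} \<subseteq> anc_candidates M h" using g unfolding anc_charging_def by auto
    show "\<exists>q. lattice_neighbour q h \<and> q \<notin> {p \<in> ?S. g p = h}"
      if "CARD('n) = 2" "h \<in> {p \<in> ?S. g p = h}"
      using g that unfolding anc_charging_def by blast
  qed
  have "finite ?S" unfolding anc_run_def by (simp add: finite_foldl_anc_step)
  moreover have "\<forall>p\<in>?S. g p \<in> H" using g unfolding anc_charging_def by blast
  ultimately show ?thesis using card_le_sum_fibres[OF _ assms(3) _ fibre] by (simp add: of_int_power)
qed

end
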